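(* Let $\mathbb C$ be a semi-abelian category, and let $f\colon X'\to X$, $g\colon Y'\to Y$, $h\colon W'\to W$ be normal epimorphisms. Then the induced morphism $f\otimes^h g\colon X'\otimes^{W'}Y'\to X\otimes^W Y$ is a normal epimorphism.
   Context: A semi-abelian category is a pointed, Barr-exact, Bourn-protomodular category with binary coproducts. For objects $W,X,Y$, let $X\otimes^W Y$ be the kernel of $\langle [\iota_1,\iota_2,0],[\iota_1,0,\iota_2]\rangle\colon W+X+Y\to (W+X)\times_W(W+Y)$, where $\iota_i$ are coproduct injections and $(W+X)\times_W(W+Y)$ is the pullback of $[1,0]\colon W+X\to W$ and $[1,0]\colon W+Y\to W$. This is functorial in $(W,X,Y)$, and $f\otimes^h g$ is the restriction of $h+f+g\colon W'+X'+Y'\to W+X+Y$ to these kernels. *)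

theory Defs
  imports Main
begin

section \<open>Categories (relativised to carriers); composition: Cmp C g f = g o f\<close>

record ('o, 'm) cat =
  Obj :: "'o set"
  Arr :: "'m set"
  Dom :: "'m \<Rightarrow> 'o"
  Cod :: "'m \<Rightarrow> 'o"
  Cmp :: "'m \<Rightarrow> 'm \<Rightarrow> 'm"
  Idm :: "'o \<Rightarrow> 'm"

definition hom :: "('o,'m) cat \<Rightarrow> 'o \<Rightarrow> 'o \<Rightarrow> 'm set" where
  "hom C a b = {f \<in> Arr C. Dom C f = a \<and> Cod C f = b}"

definition category :: "('o,'m) cat \<Rightarrow> bool" where
  "category C \<longleftrightarrow>
     (\<forall>f\<in>Arr C. Dom C f \<in> Obj C \<and> Cod C f \<in> Obj C) \<and>
     (\<forall>a\<in>Obj C. Idm C a \<in> hom C a a) \<and>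
     (\<forall>f\<in>Arr C. \<forall>g\<in>Arr C. Cod C f = Dom C g \<longrightarrow>
         Cmp C g f \<in> hom C (Dom C f) (Cod C g)) \<and>
     (\<forall>f\<in>Arr C. \<forall>g\<in>Arr C. \<forall>h\<in>Arr C. Cod C f = Dom C g \<longrightarrow> Cod C g = Dom C h \<longrightarrow>
         Cmp C h (Cmp C g f) = Cmp C (Cmp C h g) f) \<and>
     (\<forall>f\<in>Arr C. Cmp C f (Idm C (Dom C f)) = f \<and> Cmp C (Idm C (Cod C f)) f = f)"

definition iso :: "('o,'m) cat \<Rightarrow> 'm \<Rightarrow> bool" where
  "iso C f \<longleftrightarrow> f \<in> Arr C \<and> (\<exists>g\<in>hom C (Cod C f) (Dom C f).
      Cmp C g f = Idm C (Dom C f) \<and> Cmp C f g = Idm C (Cod C f))"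

definition terminal :: "('o,'m) cat \<Rightarrow> 'o \<Rightarrow> bool" where
  "terminal C t \<longleftrightarrow> t \<in> Obj C \<and> (\<forall>a\<in>Obj C. \<exists>!f. f \<in> hom C a t)"

definition zero_object :: "('o,'m) cat \<Rightarrow> 'o \<Rightarrow> bool" where
  "zero_object C z \<longleftrightarrow> z \<in> Obj C \<and>
     (\<forall>a\<in>Obj C. (\<exists>!f. f \<in> hom C a z) \<and> (\<exists>!f. f \<in> hom C z a))"

definition pointed :: "('o,'m) cat \<Rightarrow> bool" where
  "pointed C \<longleftrightarrow> (\<exists>z. zero_object C z)"

definition is_zero :: "('o,'m) cat \<Rightarrow> 'm \<Rightarrow> bool" where
  "is_zero C f \<longleftrightarrow> f \<in> Arr C \<and> (\<exists>z u v. zero_object C z \<and> u \<in> hom C (Dom C f) z \<and>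
      v \<in> hom C z (Cod C f) \<and> f = Cmp C v u)"

definition is_pullback :: "('o,'m) cat \<Rightarrow> 'm \<Rightarrow> 'm \<Rightarrow> 'm \<Rightarrow> 'm \<Rightarrow> bool" where
  "is_pullback C f g p1 p2 \<longleftrightarrow>
     f \<in> Arr C \<and> g \<in> Arr C \<and> p1 \<in> Arr C \<and> p2 \<in> Arr C \<and> Cod C f = Cod C g \<and>
     Cod C p1 = Dom C f \<and> Cod C p2 = Dom C g \<and> Dom C p1 = Dom C p2 \<and>
     Cmp C f p1 = Cmp C g p2 \<and>
     (\<forall>q1\<in>Arr C. \<forall>q2\<in>Arr C. Dom C q1 = Dom C q2 \<longrightarrow> Cod C q1 = Dom C f \<longrightarrow>
        Cod C q2 = Dom C g \<longrightarrow> Cmp C f q1 = Cmp C g q2 \<longrightarrow>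
        (\<exists>!u. u \<in> hom C (Dom C q1) (Dom C p1) \<and> Cmp C p1 u = q1 \<and> Cmp C p2 u = q2))"

definition finitely_complete :: "('o,'m) cat \<Rightarrow> bool" where
  "finitely_complete C \<longleftrightarrow> (\<exists>t. terminal C t) \<and>
     (\<forall>f\<in>Arr C. \<forall>g\<in>Arr C. Cod C f = Cod C g \<longrightarrow> (\<exists>p1 p2. is_pullback C f g p1 p2))"

definition is_kernel :: "('o,'m) cat \<Rightarrow> 'm \<Rightarrow> 'm \<Rightarrow> bool" where
  "is_kernel C f k \<longleftrightarrow> f \<in> Arr C \<and> k \<in> Arr C \<and> Cod C k = Dom C f \<and> is_zero C (Cmp C f k) \<and>
     (\<forall>q\<in>Arr C. Cod C q = Dom C f \<longrightarrow> is_zero C (Cmp C f q) \<longrightarrow>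
        (\<exists>!u. u \<in> hom C (Dom C q) (Dom C k) \<and> Cmp C k u = q))"

definition is_cokernel :: "('o,'m) cat \<Rightarrow> 'm \<Rightarrow> 'm \<Rightarrow> bool" where
  "is_cokernel C f q \<longleftrightarrow> f \<in> Arr C \<and> q \<in> Arr C \<and> Dom C q = Cod C f \<and> is_zero C (Cmp C q f) \<and>
     (\<forall>g\<in>Arr C. Dom C g = Cod C f \<longrightarrow> is_zero C (Cmp C g f) \<longrightarrow>
        (\<exists>!u. u \<in> hom C (Cod C q) (Cod C g) \<and> Cmp C u q = g))"

definition normal_epi :: "('o,'m) cat \<Rightarrow> 'm \<Rightarrow> bool" where
  "normal_epi C q \<longleftrightarrow> (\<exists>f. is_cokernel C f q)"

definition is_coequalizer :: "('o,'m) cat \<Rightarrow> 'm \<Rightarrow> 'm \<Rightarrow> 'm \<Rightarrow> bool" where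
  "is_coequalizer C f g q \<longleftrightarrow> f \<in> Arr C \<and> g \<in> Arr C \<and> q \<in> Arr C \<and>
     Dom C f = Dom C g \<and> Cod C f = Cod C g \<and> Dom C q = Cod C f \<and> Cmp C q f = Cmp C q g \<and>
     (\<forall>h\<in>Arr C. Dom C h = Cod C f \<longrightarrow> Cmp C h f = Cmp C h g \<longrightarrow>
        (\<exists>!u. u \<in> hom C (Cod C q) (Cod C h) \<and> Cmp C u q = h))"

definition regular_epi :: "('o,'m) cat \<Rightarrow> 'm \<Rightarrow> bool" where
  "regular_epi C q \<longleftrightarrow> (\<exists>f g. is_coequalizer C f g q)"

definition is_kernel_pair :: "('o,'m) cat \<Rightarrow> 'm \<Rightarrow> 'm \<Rightarrow> 'm \<Rightarrow> bool" where
  "is_kernel_pair C f r1 r2 \<longleftrightarrow> is_pullback C f f r1 r2"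

definition regular_cat :: "('o,'m) cat \<Rightarrow> bool" where
  "regular_cat C \<longleftrightarrow> finitely_complete C \<and>
     (\<forall>f r1 r2. is_kernel_pair C f r1 r2 \<longrightarrow> (\<exists>q. is_coequalizer C r1 r2 q)) \<and>
     (\<forall>q g p1 p2. is_pullback C q g p1 p2 \<longrightarrow> regular_epi C q \<longrightarrow> regular_epi C p2)"

definition equiv_rel :: "('o,'m) cat \<Rightarrow> 'm \<Rightarrow> 'm \<Rightarrow> bool" where
  "equiv_rel C r1 r2 \<longleftrightarrow> r1 \<in> Arr C \<and> r2 \<in> Arr C \<and> Dom C r1 = Dom C r2 \<and> Cod C r1 = Cod C r2 \<and>
     (\<forall>a\<in>Arr C. \<forall>b\<in>Arr C. Dom C a = Dom C b \<longrightarrow> Cod C a = Dom C r1 \<longrightarrow> Cod C b = Dom C r1 \<longrightarrow>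
        Cmp C r1 a = Cmp C r1 b \<longrightarrow> Cmp C r2 a = Cmp C r2 b \<longrightarrow> a = b) \<and>
     (\<exists>d\<in>hom C (Cod C r1) (Dom C r1).
        Cmp C r1 d = Idm C (Cod C r1) \<and> Cmp C r2 d = Idm C (Cod C r1)) \<and>
     (\<exists>s\<in>hom C (Dom C r1) (Dom C r1). Cmp C r1 s = r2 \<and> Cmp C r2 s = r1) \<and>
     (\<forall>p1 p2. is_pullback C r2 r1 p1 p2 \<longrightarrow>
        (\<exists>t\<in>hom C (Dom C p1) (Dom C r1). Cmp C r1 t = Cmp C r1 p1 \<and> Cmp C r2 t = Cmp C r2 p2))"

definition barr_exact :: "('o,'m) cat \<Rightarrow> bool" where
  "barr_exact C \<longleftrightarrow> regular_cat C \<and>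
     (\<forall>r1 r2. equiv_rel C r1 r2 \<longrightarrow> (\<exists>f. is_kernel_pair C f r1 r2))"

text \<open>Bourn protomodularity: for every f : X -> Y the change-of-base functor
  f^* : Pt(Y) -> Pt(X) reflects isomorphisms.  A morphism phi of points
  (p,s) -> (p',s') over Y = Cod f is pulled back to the induced map u between the
  pullbacks of p and p' along f.\<close>
definition protomodular :: "('o,'m) cat \<Rightarrow> bool" where
  "protomodular C \<longleftrightarrow>
     (\<forall>f p s p' s' phi a b c d u.
        f \<in> Arr C \<longrightarrow> p \<in> Arr C \<longrightarrow> s \<in> Arr C \<longrightarrow> p' \<in> Arr C \<longrightarrow> s' \<in> Arr C \<longrightarrow>
        Cod C p = Cod C f \<longrightarrow> s \<in> hom C (Cod C f) (Dom C p) \<longrightarrow> Cmp C p s = Idm C (Cod C f) \<longrightarrow>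
        Cod C p' = Cod C f \<longrightarrow> s' \<in> hom C (Cod C f) (Dom C p') \<longrightarrow> Cmp C p' s' = Idm C (Cod C f) \<longrightarrow>
        phi \<in> hom C (Dom C p) (Dom C p') \<longrightarrow> Cmp C p' phi = p \<longrightarrow> Cmp C phi s = s' \<longrightarrow>
        is_pullback C f p a b \<longrightarrow> is_pullback C f p' c d \<longrightarrow>
        u \<in> hom C (Dom C a) (Dom C c) \<longrightarrow> Cmp C c u = a \<longrightarrow> Cmp C d u = Cmp C phi b \<longrightarrow>
        iso C u \<longrightarrow> iso C phi)"

definition is_coproduct :: "('o,'m) cat \<Rightarrow> 'm \<Rightarrow> 'm \<Rightarrow> bool" where
  "is_coproduct C i1 i2 \<longleftrightarrow> i1 \<in> Arr C \<and> i2 \<in> Arr C \<and> Cod C i1 = Cod C i2 \<and>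
     (\<forall>g1\<in>Arr C. \<forall>g2\<in>Arr C. Dom C g1 = Dom C i1 \<longrightarrow> Dom C g2 = Dom C i2 \<longrightarrow> Cod C g1 = Cod C g2 \<longrightarrow>
        (\<exists>!u. u \<in> hom C (Cod C i1) (Cod C g1) \<and> Cmp C u i1 = g1 \<and> Cmp C u i2 = g2))"

definition is_coproduct3 :: "('o,'m) cat \<Rightarrow> 'm \<Rightarrow> 'm \<Rightarrow> 'm \<Rightarrow> bool" where
  "is_coproduct3 C j1 j2 j3 \<longleftrightarrow> j1 \<in> Arr C \<and> j2 \<in> Arr C \<and> j3 \<in> Arr C \<and>
     Cod C j1 = Cod C j2 \<and> Cod C j2 = Cod C j3 \<and>
     (\<forall>g1\<in>Arr C. \<forall>g2\<in>Arr C. \<forall>g3\<in>Arr C. Dom C g1 = Dom C j1 \<longrightarrow> Dom C g2 = Dom C j2 \<longrightarrow>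
        Dom C g3 = Dom C j3 \<longrightarrow> Cod C g1 = Cod C g2 \<longrightarrow> Cod C g2 = Cod C g3 \<longrightarrow>
        (\<exists>!u. u \<in> hom C (Cod C j1) (Cod C g1) \<and>
              Cmp C u j1 = g1 \<and> Cmp C u j2 = g2 \<and> Cmp C u j3 = g3))"

definition has_binary_coproducts :: "('o,'m) cat \<Rightarrow> bool" where
  "has_binary_coproducts C \<longleftrightarrow>
     (\<forall>a\<in>Obj C. \<forall>b\<in>Obj C. \<exists>i1 i2. Dom C i1 = a \<and> Dom C i2 = b \<and> is_coproduct C i1 i2)"

definition semi_abelian :: "('o,'m) cat \<Rightarrow> bool" where
  "semi_abelian C \<longleftrightarrow> category C \<and> pointed C \<and> barr_exact C \<and> protomodular C \<and>
     has_binary_coproducts C"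

text \<open>X \<otimes>^W Y: given a ternary coproduct W+X+Y with injections j1, j2, j3,
  k is a kernel of <[i1,i2,0],[i1,0,i2]> : W+X+Y -> (W+X) x_W (W+Y), where the
  pullback is of [1,0] : W+X -> W and [1,0] : W+Y -> W (for some choice of
  coproducts W+X, W+Y and of the pullback).\<close>
definition is_tensor :: "('o,'m) cat \<Rightarrow> 'o \<Rightarrow> 'o \<Rightarrow> 'o \<Rightarrow> 'm \<Rightarrow> 'm \<Rightarrow> 'm \<Rightarrow> 'm \<Rightarrow> bool" where
  "is_tensor C W X Y j1 j2 j3 k \<longleftrightarrow>
     is_coproduct3 C j1 j2 j3 \<and> Dom C j1 = W \<and> Dom C j2 = X \<and> Dom C j3 = Y \<and>
     (\<exists>a1 a2 b1 b2 e1 e2 p1 p2 m.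
        is_coproduct C a1 a2 \<and> Dom C a1 = W \<and> Dom C a2 = X \<and>
        is_coproduct C b1 b2 \<and> Dom C b1 = W \<and> Dom C b2 = Y \<and>
        e1 \<in> hom C (Cod C a1) W \<and> Cmp C e1 a1 = Idm C W \<and> is_zero C (Cmp C e1 a2) \<and>
        e2 \<in> hom C (Cod C b1) W \<and> Cmp C e2 b1 = Idm C W \<and> is_zero C (Cmp C e2 b2) \<and>
        is_pullback C e1 e2 p1 p2 \<and>
        m \<in> hom C (Cod C j1) (Dom C p1) \<and>
        Cmp C (Cmp C p1 m) j1 = a1 \<and> Cmp C (Cmp C p1 m) j2 = a2 \<and>
        is_zero C (Cmp C (Cmp C p1 m) j3) \<and>
        Cmp C (Cmp C p2 m) j1 = b1 \<and> is_zero C (Cmp C (Cmp C p2 m) j2) \<and>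
        Cmp C (Cmp C p2 m) j3 = b2 \<and>
        is_kernel C m k)"

end

theory Submission
  imports Defs
begin

text \<open>
  Write P = W + X + Y and let pX : P \<rightarrow> W + X, pY : P \<rightarrow> W + Y be the components of the
  comparison map into (W + X) \<times>_W (W + Y). The copairing [i1, i2] splits pX, and since the
  target is a pullback, X \<otimes>^W Y is the kernel of the restriction of pY to a map
  ker pX \<rightarrow> ker (W + Y \<rightarrow> W), which is split by the restriction of [i1, i3].
  Hence f \<otimes>^h g is obtained from \<sigma> = h + f + g by restricting twice to kernels along
  morphisms of split epimorphisms.

  The map \<sigma> is a regular epimorphism, being a coproduct of strong epimorphisms. In a regular
  protomodular category the restriction to kernels of a morphism of split epimorphisms whose middle
  component is a regular epimorphism is again one: pulling it back along the kernel in the codomain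
  gives a regular epimorphism out of a split epimorphism which kills the section, and the kernel
  and the section are jointly strongly epic. Finally, regular and normal epimorphisms coincide in a
  semi-abelian category.
\<close>

locale semi_abelian_category =
  fixes C :: "('o,'m) cat"
  assumes semi_abelian: "semi_abelian C"
begin

abbreviation cmp (infixr "\<cdot>" 55) where "g \<cdot> f \<equiv> Cmp C g f"

lemma category: "category C"
  using semi_abelian by (simp add: semi_abelian_def)

lemma dom_obj [simp]: "f \<in> Arr C \<Longrightarrow> Dom C f \<in> Obj C"
  and cod_obj [simp]: "f \<in> Arr C \<Longrightarrow> Cod C f \<in> Obj C"
  using category by (simp_all add: category_def)

lemma comp_in_hom: "f \<in> Arr C \<Longrightarrow> g \<in> Arr C \<Longrightarrow> Cod C f = Dom C g \<Longrightarrow> g \<cdot> f \<in> hom C (Dom C f) (Cod C g)"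
  using category unfolding category_def by blast

lemma comp_arr [simp]: "f \<in> Arr C \<Longrightarrow> g \<in> Arr C \<Longrightarrow> Cod C f = Dom C g \<Longrightarrow> g \<cdot> f \<in> Arr C"
  and dom_comp [simp]: "f \<in> Arr C \<Longrightarrow> g \<in> Arr C \<Longrightarrow> Cod C f = Dom C g \<Longrightarrow> Dom C (g \<cdot> f) = Dom C f"
  and cod_comp [simp]: "f \<in> Arr C \<Longrightarrow> g \<in> Arr C \<Longrightarrow> Cod C f = Dom C g \<Longrightarrow> Cod C (g \<cdot> f) = Cod C g"
  using comp_in_hom by (simp_all add: hom_def)

lemma comp_assoc [simp]:
  "f \<in> Arr C \<Longrightarrow> g \<in> Arr C \<Longrightarrow> h \<in> Arr C \<Longrightarrow> Cod C f = Dom C g \<Longrightarrow> Cod C g = Dom C h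
   \<Longrightarrow> (h \<cdot> g) \<cdot> f = h \<cdot> (g \<cdot> f)"
  using category unfolding category_def by metis

lemma id_hom: "a \<in> Obj C \<Longrightarrow> Idm C a \<in> hom C a a"
  using category unfolding category_def by blast

lemma id_arr [simp]: "a \<in> Obj C \<Longrightarrow> Idm C a \<in> Arr C"
  and dom_id [simp]: "a \<in> Obj C \<Longrightarrow> Dom C (Idm C a) = a"
  and cod_id [simp]: "a \<in> Obj C \<Longrightarrow> Cod C (Idm C a) = a"
  using id_hom by (simp_all add: hom_def)

lemma comp_id_left [simp]: "f \<in> Arr C \<Longrightarrow> Cod C f = b \<Longrightarrow> Idm C b \<cdot> f = f"
  and comp_id_right [simp]: "f \<in> Arr C \<Longrightarrow> Dom C f = a \<Longrightarrow> f \<cdot> Idm C a = f"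
  using category unfolding category_def by blast+

lemma comp_hom: "f \<in> hom C a b \<Longrightarrow> g \<in> hom C b c \<Longrightarrow> g \<cdot> f \<in> hom C a c"
  by (simp add: hom_def)

lemma assoc_hom: "f \<in> hom C a b \<Longrightarrow> g \<in> hom C b c \<Longrightarrow> h \<in> hom C c d \<Longrightarrow> (h \<cdot> g) \<cdot> f = h \<cdot> (g \<cdot> f)"
  by (simp add: hom_def)

lemma idl_hom: "f \<in> hom C a b \<Longrightarrow> Idm C b \<cdot> f = f"
  and idr_hom: "f \<in> hom C a b \<Longrightarrow> f \<cdot> Idm C a = f"
  by (simp_all add: hom_def)

lemma hom_obj: "f \<in> hom C a b \<Longrightarrow> a \<in> Obj C \<and> b \<in> Obj C"
  by (auto simp: hom_def dest: dom_obj cod_obj)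

lemma precomp_square:
  assumes "a \<cdot> b = c \<cdot> d" "b \<in> hom C X Y" "a \<in> hom C Y W" "d \<in> hom C X Y'" "c \<in> hom C Y' W" "z \<in> hom C Z X"
  shows "a \<cdot> (b \<cdot> z) = c \<cdot> (d \<cdot> z)"
  using assms assoc_hom[OF assms(6) assms(2) assms(3)] assoc_hom[OF assms(6) assms(4) assms(5)] by simp

lemma precomp_eq:
  assumes "a \<cdot> b = c" "b \<in> hom C X Y" "a \<in> hom C Y W" "z \<in> hom C Z X"
  shows "a \<cdot> (b \<cdot> z) = c \<cdot> z"
  using assms assoc_hom[OF assms(4) assms(2) assms(3)] by simp

section \<open>Zero arrows\<close>

definition zero_obj :: 'o where "zero_obj = (SOME z. zero_object C z)"

lemma zero_object_zero_obj: "zero_object C zero_obj"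
proof -
  have "pointed C" using semi_abelian by (simp add: semi_abelian_def)
  then show ?thesis unfolding pointed_def zero_obj_def by (metis someI_ex)
qed

lemma zero_obj_Obj [simp]: "zero_obj \<in> Obj C"
  using zero_object_zero_obj by (simp add: zero_object_def)

lemma ex1_to_zero_obj: "a \<in> Obj C \<Longrightarrow> \<exists>!u. u \<in> hom C a zero_obj"
  and ex1_from_zero_obj: "a \<in> Obj C \<Longrightarrow> \<exists>!u. u \<in> hom C zero_obj a"
  using zero_object_zero_obj by (simp_all add: zero_object_def)

lemma to_zero_obj_unique: "x \<in> hom C a zero_obj \<Longrightarrow> y \<in> hom C a zero_obj \<Longrightarrow> x = y"
  using ex1_to_zero_obj hom_obj by blast

lemma from_zero_obj_unique: "x \<in> hom C zero_obj a \<Longrightarrow> y \<in> hom C zero_obj a \<Longrightarrow> x = y"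
  using ex1_from_zero_obj hom_obj by blast

definition to_zero :: "'o \<Rightarrow> 'm" where "to_zero a = (THE u. u \<in> hom C a zero_obj)"
definition from_zero :: "'o \<Rightarrow> 'm" where "from_zero b = (THE v. v \<in> hom C zero_obj b)"
definition zero_arr :: "'o \<Rightarrow> 'o \<Rightarrow> 'm" where "zero_arr a b = from_zero b \<cdot> to_zero a"

lemma to_zero_hom: "a \<in> Obj C \<Longrightarrow> to_zero a \<in> hom C a zero_obj"
  and from_zero_hom: "b \<in> Obj C \<Longrightarrow> from_zero b \<in> hom C zero_obj b"
  unfolding to_zero_def from_zero_def
  by (rule theI', erule ex1_to_zero_obj) (rule theI', erule ex1_from_zero_obj)

lemma zero_arr_hom: "a \<in> Obj C \<Longrightarrow> b \<in> Obj C \<Longrightarrow> zero_arr a b \<in> hom C a b"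
  unfolding zero_arr_def using to_zero_hom from_zero_hom comp_hom by blast

lemma zero_arr_arr [simp]: "a \<in> Obj C \<Longrightarrow> b \<in> Obj C \<Longrightarrow> zero_arr a b \<in> Arr C"
  and dom_zero_arr [simp]: "a \<in> Obj C \<Longrightarrow> b \<in> Obj C \<Longrightarrow> Dom C (zero_arr a b) = a"
  and cod_zero_arr [simp]: "a \<in> Obj C \<Longrightarrow> b \<in> Obj C \<Longrightarrow> Cod C (zero_arr a b) = b"
  using zero_arr_hom by (simp_all add: hom_def)

lemma is_zero_zero_arr:
  assumes "a \<in> Obj C" "b \<in> Obj C" shows "is_zero C (zero_arr a b)"
  unfolding is_zero_def
proof (intro conjI exI)
  show "zero_arr a b \<in> Arr C" using assms by simp
  show "zero_object C zero_obj" "to_zero a \<in> hom C (Dom C (zero_arr a b)) zero_obj"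
    "from_zero b \<in> hom C zero_obj (Cod C (zero_arr a b))" "zero_arr a b = from_zero b \<cdot> to_zero a"
    using assms zero_object_zero_obj to_zero_hom from_zero_hom by (simp_all add: zero_arr_def[symmetric])
qed

lemma is_zero_eq_zero_arr:
  assumes "is_zero C f" shows "f = zero_arr (Dom C f) (Cod C f)"
proof -
  obtain z u v where z: "zero_object C z" and u: "u \<in> hom C (Dom C f) z"
    and v: "v \<in> hom C z (Cod C f)" and f: "f = v \<cdot> u"
    using assms unfolding is_zero_def by blast
  have zO: "z \<in> Obj C" using z by (simp add: zero_object_def)
  have aO: "Dom C f \<in> Obj C" and bO: "Cod C f \<in> Obj C" using u v hom_obj by blast+
  obtain w where w: "w \<in> hom C z zero_obj" using ex1_to_zero_obj[OF zO] by blast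
  obtain w' where w': "w' \<in> hom C zero_obj z" using ex1_from_zero_obj[OF zO] by blast
  have "w' \<cdot> w = Idm C z"
    using z comp_hom[OF w w'] id_hom[OF zO] unfolding zero_object_def by blast
  then have "f = v \<cdot> ((w' \<cdot> w) \<cdot> u)"
    using f u v zO by (simp add: hom_def)
  also have "\<dots> = (v \<cdot> w') \<cdot> (w \<cdot> u)"
    using u v w w' by (simp add: hom_def)
  also have "\<dots> = from_zero (Cod C f) \<cdot> to_zero (Dom C f)"
    using from_zero_obj_unique[OF comp_hom[OF w' v] from_zero_hom[OF bO]]
      to_zero_obj_unique[OF comp_hom[OF u w] to_zero_hom[OF aO]] by simp
  finally show ?thesis by (simp add: zero_arr_def)
qed

lemma is_zeroD: "is_zero C f \<Longrightarrow> Dom C f = a \<Longrightarrow> Cod C f = b \<Longrightarrow> f = zero_arr a b"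
  using is_zero_eq_zero_arr by blast

lemma zero_arr_comp [simp]:
  assumes f: "f \<in> Arr C" and a: "Cod C f = a" and b: "b \<in> Obj C"
  shows "zero_arr a b \<cdot> f = zero_arr (Dom C f) b"
proof -
  have fh: "f \<in> hom C (Dom C f) a" using f a by (simp add: hom_def)
  have aO: "a \<in> Obj C" and dO: "Dom C f \<in> Obj C" using hom_obj[OF fh] by simp_all
  have "to_zero a \<cdot> f = to_zero (Dom C f)"
    using to_zero_obj_unique[OF comp_hom[OF fh to_zero_hom[OF aO]] to_zero_hom[OF dO]] .
  then show ?thesis
    using assoc_hom[OF fh to_zero_hom[OF aO] from_zero_hom[OF b]] by (simp add: zero_arr_def)
qed

lemma comp_zero_arr [simp]:
  assumes g: "g \<in> Arr C" and b: "Dom C g = b" and a: "a \<in> Obj C"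
  shows "g \<cdot> zero_arr a b = zero_arr a (Cod C g)"
proof -
  have gh: "g \<in> hom C b (Cod C g)" using g b by (simp add: hom_def)
  have bO: "b \<in> Obj C" and cO: "Cod C g \<in> Obj C" using hom_obj[OF gh] by simp_all
  have "g \<cdot> from_zero b = from_zero (Cod C g)"
    using from_zero_obj_unique[OF comp_hom[OF from_zero_hom[OF bO] gh] from_zero_hom[OF cO]] .
  then show ?thesis
    using assoc_hom[OF to_zero_hom[OF a] from_zero_hom[OF bO] gh] by (simp add: zero_arr_def)
qed

definition monic :: "'m \<Rightarrow> bool" where
  "monic f \<longleftrightarrow> f \<in> Arr C \<and>
     (\<forall>a x y. x \<in> hom C a (Dom C f) \<longrightarrow> y \<in> hom C a (Dom C f) \<longrightarrow> f \<cdot> x = f \<cdot> y \<longrightarrow> x = y)"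

definition epic :: "'m \<Rightarrow> bool" where
  "epic f \<longleftrightarrow> f \<in> Arr C \<and>
     (\<forall>b x y. x \<in> hom C (Cod C f) b \<longrightarrow> y \<in> hom C (Cod C f) b \<longrightarrow> x \<cdot> f = y \<cdot> f \<longrightarrow> x = y)"

lemma monicI:
  "f \<in> Arr C \<Longrightarrow> (\<And>a x y. x \<in> hom C a (Dom C f) \<Longrightarrow> y \<in> hom C a (Dom C f) \<Longrightarrow> f \<cdot> x = f \<cdot> y \<Longrightarrow> x = y)
   \<Longrightarrow> monic f"
  unfolding monic_def by blast

lemma monicD: "monic f \<Longrightarrow> x \<in> hom C a (Dom C f) \<Longrightarrow> y \<in> hom C a (Dom C f) \<Longrightarrow> f \<cdot> x = f \<cdot> y \<Longrightarrow> x = y"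
  unfolding monic_def by blast

lemma epicI:
  "f \<in> Arr C \<Longrightarrow> (\<And>b x y. x \<in> hom C (Cod C f) b \<Longrightarrow> y \<in> hom C (Cod C f) b \<Longrightarrow> x \<cdot> f = y \<cdot> f \<Longrightarrow> x = y)
   \<Longrightarrow> epic f"
  unfolding epic_def by blast

lemma epicD: "epic f \<Longrightarrow> x \<in> hom C (Cod C f) b \<Longrightarrow> y \<in> hom C (Cod C f) b \<Longrightarrow> x \<cdot> f = y \<cdot> f \<Longrightarrow> x = y"
  unfolding epic_def by blast

lemma monic_arr: "monic f \<Longrightarrow> f \<in> Arr C"
  and epic_arr: "epic f \<Longrightarrow> f \<in> Arr C"
  unfolding monic_def epic_def by blast+

lemma monic_comp_cancel:
  assumes m: "monic (g \<cdot> f)" and f: "f \<in> hom C a b" and g: "g \<in> hom C b c"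
  shows "monic f"
proof (rule monicI)
  show "f \<in> Arr C" using f by (simp add: hom_def)
  fix z x y assume x: "x \<in> hom C z (Dom C f)" and y: "y \<in> hom C z (Dom C f)" and e: "f \<cdot> x = f \<cdot> y"
  have "(g \<cdot> f) \<cdot> x = (g \<cdot> f) \<cdot> y"
    using e assoc_hom[OF x _ g] assoc_hom[OF y _ g] f by (simp add: hom_def)
  then show "x = y" using monicD[OF m] x y f g by (simp add: hom_def)
qed

lemma epic_comp:
  assumes f: "epic f" and g: "epic g" and c: "Cod C f = Dom C g"
  shows "epic (g \<cdot> f)"
proof -
  have fh: "f \<in> hom C (Dom C f) (Dom C g)" and gh: "g \<in> hom C (Dom C g) (Cod C g)"
    using epic_arr[OF f] epic_arr[OF g] c by (simp_all add: hom_def)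
  show ?thesis
  proof (rule epicI)
    show "g \<cdot> f \<in> Arr C" using fh gh by (simp add: hom_def)
    fix b x y assume x: "x \<in> hom C (Cod C (g \<cdot> f)) b" and y: "y \<in> hom C (Cod C (g \<cdot> f)) b"
      and e: "x \<cdot> (g \<cdot> f) = y \<cdot> (g \<cdot> f)"
    have x': "x \<in> hom C (Cod C g) b" and y': "y \<in> hom C (Cod C g) b" using x y fh gh by (simp_all add: hom_def)
    have "(x \<cdot> g) \<cdot> f = (y \<cdot> g) \<cdot> f" using e assoc_hom[OF fh gh x'] assoc_hom[OF fh gh y'] by simp
    then have "x \<cdot> g = y \<cdot> g" using epicD[OF f] comp_hom[OF gh x'] comp_hom[OF gh y'] c by simp
    then show "x = y" using epicD[OF g x' y'] by simp
  qed
qed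

lemma iso_inv:
  assumes "iso C m"
  obtains d where "d \<in> hom C (Cod C m) (Dom C m)" "d \<cdot> m = Idm C (Dom C m)" "m \<cdot> d = Idm C (Cod C m)"
  using assms unfolding iso_def by blast

lemma iso_Idm: "a \<in> Obj C \<Longrightarrow> iso C (Idm C a)"
  unfolding iso_def using id_hom[of a] by (intro conjI bexI[of _ "Idm C a"]) (simp_all add: hom_def)

lemma iso_epic:
  assumes i: "iso C m" shows "epic m"
proof -
  obtain d where d: "d \<in> hom C (Cod C m) (Dom C m)" "m \<cdot> d = Idm C (Cod C m)"
    using iso_inv[OF i] by blast
  have mh: "m \<in> hom C (Dom C m) (Cod C m)" using i by (simp add: iso_def hom_def)
  show ?thesis
  proof (rule epicI)
    show "m \<in> Arr C" using mh by (simp add: hom_def)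
    fix b x y assume x: "x \<in> hom C (Cod C m) b" and y: "y \<in> hom C (Cod C m) b" and e: "x \<cdot> m = y \<cdot> m"
    have "x \<cdot> (m \<cdot> d) = y \<cdot> (m \<cdot> d)" using assoc_hom[OF d(1) mh x] assoc_hom[OF d(1) mh y] e by simp
    then show "x = y" using d(2) idr_hom[OF x] idr_hom[OF y] by simp
  qed
qed

lemma monic_split_epi_iso:
  assumes m: "monic m" and d: "d \<in> hom C (Cod C m) (Dom C m)" and md: "m \<cdot> d = Idm C (Cod C m)"
  shows "iso C m"
proof -
  have mh: "m \<in> hom C (Dom C m) (Cod C m)" using monic_arr[OF m] by (simp add: hom_def)
  have "m \<cdot> (d \<cdot> m) = m \<cdot> Idm C (Dom C m)"
    using assoc_hom[OF mh d mh] md idl_hom[OF mh] idr_hom[OF mh] by simp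
  then have "d \<cdot> m = Idm C (Dom C m)"
    using monicD[OF m _ id_hom] comp_hom[OF mh d] hom_obj[OF mh] by blast
  then show ?thesis unfolding iso_def using mh d md by (auto simp: hom_def)
qed

section \<open>Pullbacks and kernels\<close>

lemma pullbackD:
  assumes "is_pullback C f g p1 p2"
  shows "f \<in> Arr C" "g \<in> Arr C" "p1 \<in> Arr C" "p2 \<in> Arr C" "Cod C f = Cod C g" "Cod C p1 = Dom C f"
    "Cod C p2 = Dom C g" "Dom C p1 = Dom C p2" "f \<cdot> p1 = g \<cdot> p2"
  using assms by (simp_all add: is_pullback_def)

lemma pullback_ex1:
  assumes "is_pullback C f g p1 p2" "q1 \<in> Arr C" "q2 \<in> Arr C" "Dom C q1 = Dom C q2"
    "Cod C q1 = Dom C f" "Cod C q2 = Dom C g" "f \<cdot> q1 = g \<cdot> q2"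
  shows "\<exists>!u. u \<in> hom C (Dom C q1) (Dom C p1) \<and> p1 \<cdot> u = q1 \<and> p2 \<cdot> u = q2"
proof -
  have "\<forall>q1\<in>Arr C. \<forall>q2\<in>Arr C. Dom C q1 = Dom C q2 \<longrightarrow> Cod C q1 = Dom C f \<longrightarrow>
        Cod C q2 = Dom C g \<longrightarrow> f \<cdot> q1 = g \<cdot> q2 \<longrightarrow>
        (\<exists>!u. u \<in> hom C (Dom C q1) (Dom C p1) \<and> p1 \<cdot> u = q1 \<and> p2 \<cdot> u = q2)"
    using assms(1) unfolding is_pullback_def by (elim conjE)
  then show ?thesis using assms(2-7) by blast
qed

lemma pullback_lift:
  assumes pb: "is_pullback C f g p1 p2" and q1: "q1 \<in> hom C Z (Dom C f)" and q2: "q2 \<in> hom C Z (Dom C g)"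
    and e: "f \<cdot> q1 = g \<cdot> q2"
  obtains u where "u \<in> hom C Z (Dom C p1)" "p1 \<cdot> u = q1" "p2 \<cdot> u = q2"
proof -
  have "\<exists>!u. u \<in> hom C (Dom C q1) (Dom C p1) \<and> p1 \<cdot> u = q1 \<and> p2 \<cdot> u = q2"
    by (rule pullback_ex1[OF pb]) (use q1 q2 e in \<open>simp_all add: hom_def\<close>)
  then show ?thesis using that q1 by (auto simp: hom_def)
qed

lemma pullback_uniq:
  assumes pb: "is_pullback C f g p1 p2" and x: "x \<in> hom C Z (Dom C p1)" and y: "y \<in> hom C Z (Dom C p1)"
    and e1: "p1 \<cdot> x = p1 \<cdot> y" and e2: "p2 \<cdot> x = p2 \<cdot> y"
  shows "x = y"
proof -
  note a = pullbackD[OF pb]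
  have p1h: "p1 \<in> hom C (Dom C p1) (Dom C f)" and p2h: "p2 \<in> hom C (Dom C p1) (Dom C g)"
    and fh: "f \<in> hom C (Dom C f) (Cod C f)" and gh: "g \<in> hom C (Dom C g) (Cod C f)"
    using a by (simp_all add: hom_def)
  have e: "f \<cdot> (p1 \<cdot> x) = g \<cdot> (p2 \<cdot> x)" using precomp_square[OF a(9) p1h fh p2h gh x] .
  have "\<exists>!u. u \<in> hom C (Dom C (p1 \<cdot> x)) (Dom C p1) \<and> p1 \<cdot> u = p1 \<cdot> x \<and> p2 \<cdot> u = p2 \<cdot> x"
    by (rule pullback_ex1[OF pb]) (use comp_hom[OF x p1h] comp_hom[OF x p2h] e in \<open>simp_all add: hom_def\<close>)
  then show ?thesis using x y e1 e2 comp_hom[OF x p1h] by (auto simp: hom_def)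
qed

lemma pullbackI:
  assumes "f \<in> hom C X Z" "g \<in> hom C Y Z" "p1 \<in> hom C P X" "p2 \<in> hom C P Y" "f \<cdot> p1 = g \<cdot> p2"
    and lift: "\<And>W q1 q2. q1 \<in> hom C W X \<Longrightarrow> q2 \<in> hom C W Y \<Longrightarrow> f \<cdot> q1 = g \<cdot> q2
       \<Longrightarrow> \<exists>u. u \<in> hom C W P \<and> p1 \<cdot> u = q1 \<and> p2 \<cdot> u = q2"
    and uniq: "\<And>W u v. u \<in> hom C W P \<Longrightarrow> v \<in> hom C W P \<Longrightarrow> p1 \<cdot> u = p1 \<cdot> v \<Longrightarrow> p2 \<cdot> u = p2 \<cdot> v \<Longrightarrow> u = v"
  shows "is_pullback C f g p1 p2"
  unfolding is_pullback_def
proof (intro conjI ballI impI)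
  show "f \<in> Arr C" "g \<in> Arr C" "p1 \<in> Arr C" "p2 \<in> Arr C" "Cod C f = Cod C g" "Cod C p1 = Dom C f"
    "Cod C p2 = Dom C g" "Dom C p1 = Dom C p2" "f \<cdot> p1 = g \<cdot> p2"
    using assms(1-5) by (simp_all add: hom_def)
  fix q1 q2 assume "q1 \<in> Arr C" "q2 \<in> Arr C" "Dom C q1 = Dom C q2"
    "Cod C q1 = Dom C f" "Cod C q2 = Dom C g" and e: "f \<cdot> q1 = g \<cdot> q2"
  then have q1: "q1 \<in> hom C (Dom C q1) X" and q2: "q2 \<in> hom C (Dom C q1) Y"
    using assms(1,2) by (simp_all add: hom_def)
  obtain u where "u \<in> hom C (Dom C q1) P" "p1 \<cdot> u = q1" "p2 \<cdot> u = q2" using lift[OF q1 q2 e] by blast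
  then show "\<exists>!u. u \<in> hom C (Dom C q1) (Dom C p1) \<and> p1 \<cdot> u = q1 \<and> p2 \<cdot> u = q2"
    using uniq assms(3) by (auto simp: hom_def)
qed

lemma pullback_exists:
  assumes "f \<in> Arr C" "g \<in> Arr C" "Cod C f = Cod C g"
  obtains p1 p2 where "is_pullback C f g p1 p2"
proof -
  have "finitely_complete C"
    using semi_abelian by (simp add: semi_abelian_def barr_exact_def regular_cat_def)
  then show ?thesis using assms that unfolding finitely_complete_def by blast
qed

lemma pullback_monic:
  assumes pb: "is_pullback C f g p1 p2" and m: "monic g"
  shows "monic p1"
proof (rule monicI)
  note a = pullbackD[OF pb]
  show "p1 \<in> Arr C" using a by simp
  have p1h: "p1 \<in> hom C (Dom C p1) (Dom C f)" and p2h: "p2 \<in> hom C (Dom C p1) (Dom C g)"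
    and fh: "f \<in> hom C (Dom C f) (Cod C f)" and gh: "g \<in> hom C (Dom C g) (Cod C f)"
    using a by (simp_all add: hom_def)
  fix Z x y assume x: "x \<in> hom C Z (Dom C p1)" and y: "y \<in> hom C Z (Dom C p1)" and e: "p1 \<cdot> x = p1 \<cdot> y"
  have "g \<cdot> (p2 \<cdot> x) = g \<cdot> (p2 \<cdot> y)"
    using precomp_square[OF a(9) p1h fh p2h gh x] precomp_square[OF a(9) p1h fh p2h gh y] e by simp
  then have "p2 \<cdot> x = p2 \<cdot> y" using monicD[OF m comp_hom[OF x p2h] comp_hom[OF y p2h]] by simp
  then show "x = y" using pullback_uniq[OF pb x y e] by simp
qed

lemma kernelD:
  assumes "is_kernel C f k"
  shows "f \<in> Arr C" "k \<in> Arr C" "Cod C k = Dom C f" "f \<cdot> k = zero_arr (Dom C k) (Cod C f)"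
proof -
  show "f \<in> Arr C" "k \<in> Arr C" "Cod C k = Dom C f" using assms by (simp_all add: is_kernel_def)
  then show "f \<cdot> k = zero_arr (Dom C k) (Cod C f)"
    using assms is_zeroD[of "f \<cdot> k"] by (simp add: is_kernel_def)
qed

lemma kernel_ex1:
  assumes "is_kernel C f k" "q \<in> Arr C" "Cod C q = Dom C f" "is_zero C (f \<cdot> q)"
  shows "\<exists>!u. u \<in> hom C (Dom C q) (Dom C k) \<and> k \<cdot> u = q"
proof -
  have "\<forall>q\<in>Arr C. Cod C q = Dom C f \<longrightarrow> is_zero C (f \<cdot> q) \<longrightarrow>
        (\<exists>!u. u \<in> hom C (Dom C q) (Dom C k) \<and> k \<cdot> u = q)"
    using assms(1) unfolding is_kernel_def by (elim conjE)
  then show ?thesis using assms(2-4) by blast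
qed

lemma kernel_lift:
  assumes k: "is_kernel C f k" and q: "q \<in> hom C Z (Dom C f)" and z: "f \<cdot> q = zero_arr Z (Cod C f)"
  obtains u where "u \<in> hom C Z (Dom C k)" "k \<cdot> u = q"
proof -
  have z0: "is_zero C (f \<cdot> q)"
    using z q kernelD(1)[OF k] is_zero_zero_arr hom_obj by (metis cod_obj)
  have "\<exists>!u. u \<in> hom C (Dom C q) (Dom C k) \<and> k \<cdot> u = q"
    by (rule kernel_ex1[OF k _ _ z0]) (use q in \<open>simp_all add: hom_def\<close>)
  then show ?thesis using that q by (auto simp: hom_def)
qed

lemma kernel_monic:
  assumes k: "is_kernel C f k" shows "monic k"
proof (rule monicI)
  note kp = kernelD[OF k]
  show "k \<in> Arr C" using kp by simp
  fix Z x y assume x: "x \<in> hom C Z (Dom C k)" and y: "y \<in> hom C Z (Dom C k)" and e: "k \<cdot> x = k \<cdot> y"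
  have "f \<cdot> (k \<cdot> x) = zero_arr Z (Cod C f)"
    using kp x comp_assoc[of x k f] by (simp add: hom_def)
  then have z0: "is_zero C (f \<cdot> (k \<cdot> x))" using kp x is_zero_zero_arr hom_obj by (metis cod_obj)
  have "\<exists>!u. u \<in> hom C (Dom C (k \<cdot> x)) (Dom C k) \<and> k \<cdot> u = k \<cdot> x"
    by (rule kernel_ex1[OF k _ _ z0]) (use kp x in \<open>simp_all add: hom_def\<close>)
  then show "x = y" using x y e kp by (auto simp: hom_def)
qed

lemma kernelI:
  assumes "f \<in> Arr C" "k \<in> Arr C" "Cod C k = Dom C f" "f \<cdot> k = zero_arr (Dom C k) (Cod C f)"
    and lift: "\<And>Z q. q \<in> hom C Z (Dom C f) \<Longrightarrow> f \<cdot> q = zero_arr Z (Cod C f)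
       \<Longrightarrow> \<exists>u. u \<in> hom C Z (Dom C k) \<and> k \<cdot> u = q"
    and "monic k"
  shows "is_kernel C f k"
  unfolding is_kernel_def
proof (intro conjI ballI impI)
  show "f \<in> Arr C" "k \<in> Arr C" "Cod C k = Dom C f" by fact+
  show "is_zero C (f \<cdot> k)" using assms(1-4) is_zero_zero_arr by simp
  fix q assume q: "q \<in> Arr C" "Cod C q = Dom C f" and z: "is_zero C (f \<cdot> q)"
  have "f \<cdot> q = zero_arr (Dom C q) (Cod C f)" using is_zeroD[OF z] q assms(1) by simp
  then obtain u where u: "u \<in> hom C (Dom C q) (Dom C k)" "k \<cdot> u = q"
    using lift q by (auto simp: hom_def)
  then show "\<exists>!u. u \<in> hom C (Dom C q) (Dom C k) \<and> k \<cdot> u = q"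
    using monicD[OF \<open>monic k\<close>] by blast
qed

lemma kernel_exists:
  assumes f: "f \<in> Arr C" obtains k where "is_kernel C f k"
proof -
  obtain p1 p2 where pb: "is_pullback C f (zero_arr zero_obj (Cod C f)) p1 p2"
    using pullback_exists[OF f, of "zero_arr zero_obj (Cod C f)"] f by auto
  note a = pullbackD[OF pb]
  have p2h: "p2 \<in> hom C (Dom C p1) zero_obj" using a f by (simp add: hom_def)
  have mon: "monic p1"
  proof (rule monicI)
    show "p1 \<in> Arr C" using a by simp
    fix Z x y assume x: "x \<in> hom C Z (Dom C p1)" and y: "y \<in> hom C Z (Dom C p1)" and e: "p1 \<cdot> x = p1 \<cdot> y"
    have "p2 \<cdot> x = p2 \<cdot> y" using to_zero_obj_unique comp_hom[OF x p2h] comp_hom[OF y p2h] by blast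
    then show "x = y" using pullback_uniq[OF pb x y e] by simp
  qed
  have "is_kernel C f p1"
  proof (rule kernelI[OF f a(3) a(6) _ _ mon])
    show "f \<cdot> p1 = zero_arr (Dom C p1) (Cod C f)" using a f p2h by (simp add: hom_def)
    fix Z q assume q: "q \<in> hom C Z (Dom C f)" and fq: "f \<cdot> q = zero_arr Z (Cod C f)"
    have ZO: "Z \<in> Obj C" using q hom_obj by blast
    have "zero_arr Z zero_obj \<in> hom C Z (Dom C (zero_arr zero_obj (Cod C f)))" using ZO zero_arr_hom f by simp
    moreover have "f \<cdot> q = zero_arr zero_obj (Cod C f) \<cdot> zero_arr Z zero_obj" using ZO f fq by simp
    ultimately obtain u where "u \<in> hom C Z (Dom C p1)" "p1 \<cdot> u = q"
      using pullback_lift[OF pb q] by metis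
    then show "\<exists>u. u \<in> hom C Z (Dom C p1) \<and> p1 \<cdot> u = q" by blast
  qed
  then show ?thesis using that by blast
qed

lemma cokernelI:
  assumes "k \<in> Arr C" "q \<in> Arr C" "Dom C q = Cod C k" "is_zero C (q \<cdot> k)"
    and "\<And>g. g \<in> Arr C \<Longrightarrow> Dom C g = Cod C k \<Longrightarrow> is_zero C (g \<cdot> k)
       \<Longrightarrow> \<exists>!u. u \<in> hom C (Cod C q) (Cod C g) \<and> u \<cdot> q = g"
  shows "is_cokernel C k q"
  using assms unfolding is_cokernel_def by blast

definition kernel_map :: "'m \<Rightarrow> 'm \<Rightarrow> 'm \<Rightarrow> 'm" where
  "kernel_map \<kappa> \<alpha> \<kappa>' = (THE u. u \<in> hom C (Dom C \<kappa>') (Dom C \<kappa>) \<and> \<kappa> \<cdot> u = \<alpha> \<cdot> \<kappa>')"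

lemma kernel_map:
  assumes k: "is_kernel C p \<kappa>" and k': "is_kernel C p' \<kappa>'"
    and ph: "p \<in> hom C X Y" and p'h: "p' \<in> hom C X' Y'" and \<alpha>h: "\<alpha> \<in> hom C X' X" and \<beta>h: "\<beta> \<in> hom C Y' Y"
    and p\<alpha>: "p \<cdot> \<alpha> = \<beta> \<cdot> p'"
  shows "kernel_map \<kappa> \<alpha> \<kappa>' \<in> hom C (Dom C \<kappa>') (Dom C \<kappa>)" "\<kappa> \<cdot> kernel_map \<kappa> \<alpha> \<kappa>' = \<alpha> \<cdot> \<kappa>'"
proof -
  define N' where "N' = Dom C \<kappa>'"
  have \<kappa>'h: "\<kappa>' \<in> hom C N' X'" using kernelD[OF k'] p'h by (simp add: hom_def N'_def)
  have "p \<cdot> (\<alpha> \<cdot> \<kappa>') = zero_arr N' (Cod C p)"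
    using precomp_square[OF p\<alpha> \<alpha>h ph p'h \<beta>h \<kappa>'h] kernelD(4)[OF k'] p'h \<beta>h ph hom_obj[OF \<kappa>'h]
    by (simp add: hom_def N'_def)
  moreover have "\<alpha> \<cdot> \<kappa>' \<in> hom C N' (Dom C p)" using comp_hom[OF \<kappa>'h \<alpha>h] ph by (simp add: hom_def)
  ultimately obtain u where uh: "u \<in> hom C N' (Dom C \<kappa>)" and \<kappa>u: "\<kappa> \<cdot> u = \<alpha> \<cdot> \<kappa>'"
    using kernel_lift[OF k] by blast
  have "\<exists>!u. u \<in> hom C N' (Dom C \<kappa>) \<and> \<kappa> \<cdot> u = \<alpha> \<cdot> \<kappa>'"
  proof (rule ex1I)
    show "u \<in> hom C N' (Dom C \<kappa>) \<and> \<kappa> \<cdot> u = \<alpha> \<cdot> \<kappa>'" using uh \<kappa>u ..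
    fix v assume "v \<in> hom C N' (Dom C \<kappa>) \<and> \<kappa> \<cdot> v = \<alpha> \<cdot> \<kappa>'"
    then show "v = u" using monicD[OF kernel_monic[OF k] _ uh] \<kappa>u by simp
  qed
  from theI'[OF this] show "kernel_map \<kappa> \<alpha> \<kappa>' \<in> hom C (Dom C \<kappa>') (Dom C \<kappa>)" "\<kappa> \<cdot> kernel_map \<kappa> \<alpha> \<kappa>' = \<alpha> \<cdot> \<kappa>'"
    by (simp_all add: kernel_map_def N'_def)
qed

lemma restriction_square:
  assumes \<kappa>m: "monic \<kappa>Y" and \<kappa>Yh: "\<kappa>Y \<in> hom C NY PY" and \<kappa>Xh: "\<kappa>X \<in> hom C NX PX"
    and \<kappa>Y'h: "\<kappa>Y' \<in> hom C NY' PY'" and \<kappa>X'h: "\<kappa>X' \<in> hom C NX' PX'"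
    and fh: "f \<in> hom C PX PY" and f'h: "f' \<in> hom C PX' PY'" and gh: "g \<in> hom C PX' PX" and hh: "h \<in> hom C PY' PY"
    and qh: "q \<in> hom C NX NY" and q'h: "q' \<in> hom C NX' NY'" and ah: "a \<in> hom C NX' NX" and bh: "b \<in> hom C NY' NY"
    and q: "\<kappa>Y \<cdot> q = f \<cdot> \<kappa>X" and q': "\<kappa>Y' \<cdot> q' = f' \<cdot> \<kappa>X'"
    and a: "\<kappa>X \<cdot> a = g \<cdot> \<kappa>X'" and b: "\<kappa>Y \<cdot> b = h \<cdot> \<kappa>Y'" and fg: "f \<cdot> g = h \<cdot> f'"
  shows "q \<cdot> a = b \<cdot> q'"
proof -
  have "\<kappa>Y \<cdot> (q \<cdot> a) = f \<cdot> (\<kappa>X \<cdot> a)" using precomp_square[OF q qh \<kappa>Yh \<kappa>Xh fh ah] .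
  also have "\<dots> = h \<cdot> (f' \<cdot> \<kappa>X')" using a precomp_square[OF fg gh fh f'h hh \<kappa>X'h] by simp
  also have "\<dots> = \<kappa>Y \<cdot> (b \<cdot> q')" using q' precomp_square[OF b[symmetric] \<kappa>Y'h hh bh \<kappa>Yh q'h] by simp
  finally show ?thesis using monicD[OF \<kappa>m] comp_hom[OF ah qh] comp_hom[OF q'h bh] \<kappa>Yh by (simp add: hom_def)
qed

lemma product_exists:
  assumes "A \<in> Obj C" "B \<in> Obj C"
  obtains \<pi>1 P \<pi>2 where "\<pi>1 \<in> hom C P A" "\<pi>2 \<in> hom C P B"
    "\<And>Z a b. a \<in> hom C Z A \<Longrightarrow> b \<in> hom C Z B \<Longrightarrow> \<exists>u. u \<in> hom C Z P \<and> \<pi>1 \<cdot> u = a \<and> \<pi>2 \<cdot> u = b"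
    "\<And>Z u v. u \<in> hom C Z P \<Longrightarrow> v \<in> hom C Z P \<Longrightarrow> \<pi>1 \<cdot> u = \<pi>1 \<cdot> v \<Longrightarrow> \<pi>2 \<cdot> u = \<pi>2 \<cdot> v \<Longrightarrow> u = v"
proof -
  have "zero_arr A zero_obj \<in> Arr C" "zero_arr B zero_obj \<in> Arr C"
    "Cod C (zero_arr A zero_obj) = Cod C (zero_arr B zero_obj)" using assms by simp_all
  then obtain \<pi>1 \<pi>2 where pr: "is_pullback C (zero_arr A zero_obj) (zero_arr B zero_obj) \<pi>1 \<pi>2"
    by (rule pullback_exists)
  note pa = pullbackD[OF pr]
  have \<pi>1h: "\<pi>1 \<in> hom C (Dom C \<pi>1) A" and \<pi>2h: "\<pi>2 \<in> hom C (Dom C \<pi>1) B"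
    using pa assms by (simp_all add: hom_def)
  have "\<exists>u. u \<in> hom C Z (Dom C \<pi>1) \<and> \<pi>1 \<cdot> u = a \<and> \<pi>2 \<cdot> u = b"
    if a: "a \<in> hom C Z A" and b: "b \<in> hom C Z B" for Z a b
  proof -
    have ab: "zero_arr A zero_obj \<cdot> a = zero_arr B zero_obj \<cdot> b" using a b hom_obj[OF a] by (simp add: hom_def)
    have "a \<in> hom C Z (Dom C (zero_arr A zero_obj))" "b \<in> hom C Z (Dom C (zero_arr B zero_obj))"
      using a b assms by simp_all
    then show ?thesis using pullback_lift[OF pr _ _ ab] by blast
  qed
  moreover note pullback_uniq[OF pr]
  ultimately show ?thesis using that[OF \<pi>1h \<pi>2h] by blast
qed

lemma equalizer_exists:
  assumes x: "x \<in> hom C R G" and y: "y \<in> hom C R G"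
  obtains e E where "e \<in> hom C E R" "monic e" "x \<cdot> e = y \<cdot> e"
    "\<And>Z z. z \<in> hom C Z R \<Longrightarrow> x \<cdot> z = y \<cdot> z \<Longrightarrow> \<exists>w. w \<in> hom C Z E \<and> e \<cdot> w = z"
proof -
  have RO: "R \<in> Obj C" and GO: "G \<in> Obj C" using hom_obj[OF x] by simp_all
  obtain \<pi>1 P \<pi>2 where \<pi>1h: "\<pi>1 \<in> hom C P R" and \<pi>2h: "\<pi>2 \<in> hom C P G"
    and pair: "\<And>Z a b. a \<in> hom C Z R \<Longrightarrow> b \<in> hom C Z G \<Longrightarrow> \<exists>u. u \<in> hom C Z P \<and> \<pi>1 \<cdot> u = a \<and> \<pi>2 \<cdot> u = b"
    and puniq: "\<And>Z u v. u \<in> hom C Z P \<Longrightarrow> v \<in> hom C Z P \<Longrightarrow> \<pi>1 \<cdot> u = \<pi>1 \<cdot> v \<Longrightarrow> \<pi>2 \<cdot> u = \<pi>2 \<cdot> v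
       \<Longrightarrow> u = v"
    using product_exists[OF RO GO] by blast
  obtain ix where ixh: "ix \<in> hom C R P" and ix1: "\<pi>1 \<cdot> ix = Idm C R" and ix2: "\<pi>2 \<cdot> ix = x"
    using pair[OF id_hom[OF RO] x] by blast
  obtain iy where iyh: "iy \<in> hom C R P" and iy1: "\<pi>1 \<cdot> iy = Idm C R" and iy2: "\<pi>2 \<cdot> iy = y"
    using pair[OF id_hom[OF RO] y] by blast
  have "ix \<in> Arr C" "iy \<in> Arr C" "Cod C ix = Cod C iy" using ixh iyh by (simp_all add: hom_def)
  then obtain e1 e2 where pbE: "is_pullback C ix iy e1 e2" by (rule pullback_exists)
  note pe = pullbackD[OF pbE]
  define E where "E = Dom C e1"
  have e1h: "e1 \<in> hom C E R" and e2h: "e2 \<in> hom C E R" using pe ixh iyh by (simp_all add: hom_def E_def)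
  have "e1 = \<pi>1 \<cdot> (ix \<cdot> e1)" using precomp_eq[OF ix1 ixh \<pi>1h e1h] idl_hom[OF e1h] by simp
  also have "\<dots> = e2" using pe(9) precomp_eq[OF iy1 iyh \<pi>1h e2h] idl_hom[OF e2h] by simp
  finally have e12: "e1 = e2" .
  have "x \<cdot> e1 = \<pi>2 \<cdot> (ix \<cdot> e1)" using precomp_eq[OF ix2 ixh \<pi>2h e1h] by simp
  also have "\<dots> = y \<cdot> e1" using pe(9) precomp_eq[OF iy2 iyh \<pi>2h e2h] e12 by simp
  finally have xe: "x \<cdot> e1 = y \<cdot> e1" .
  have mon: "monic e1"
  proof (rule monicI)
    show "e1 \<in> Arr C" using e1h by (simp add: hom_def)
    fix Z a b assume "a \<in> hom C Z (Dom C e1)" "b \<in> hom C Z (Dom C e1)" "e1 \<cdot> a = e1 \<cdot> b"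
    then show "a = b" using pullback_uniq[OF pbE] e12 by simp
  qed
  have univ: "\<exists>w. w \<in> hom C Z E \<and> e1 \<cdot> w = z" if z: "z \<in> hom C Z R" and xz: "x \<cdot> z = y \<cdot> z" for Z z
  proof -
    have "ix \<cdot> z = iy \<cdot> z"
      using puniq[OF comp_hom[OF z ixh] comp_hom[OF z iyh]]
        precomp_eq[OF ix1 ixh \<pi>1h z] precomp_eq[OF iy1 iyh \<pi>1h z]
        precomp_eq[OF ix2 ixh \<pi>2h z] precomp_eq[OF iy2 iyh \<pi>2h z] xz by simp
    moreover have "z \<in> hom C Z (Dom C ix)" "z \<in> hom C Z (Dom C iy)" using z ixh iyh by (simp_all add: hom_def)
    ultimately obtain w where "w \<in> hom C Z (Dom C e1)" "e1 \<cdot> w = z"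
      using pullback_lift[OF pbE] by metis
    then show ?thesis by (auto simp: E_def)
  qed
  show ?thesis using that[OF e1h mon xe univ] .
qed

section \<open>Regular epimorphisms\<close>

lemma coequalizerD:
  assumes "is_coequalizer C f g q"
  shows "f \<in> Arr C" "g \<in> Arr C" "q \<in> Arr C" "Dom C f = Dom C g" "Cod C f = Cod C g"
    "Dom C q = Cod C f" "q \<cdot> f = q \<cdot> g"
  using assms by (simp_all add: is_coequalizer_def)

lemma coequalizer_ex1:
  assumes "is_coequalizer C f g q" "h \<in> Arr C" "Dom C h = Cod C f" "h \<cdot> f = h \<cdot> g"
  shows "\<exists>!u. u \<in> hom C (Cod C q) (Cod C h) \<and> u \<cdot> q = h"
proof -
  have "\<forall>h\<in>Arr C. Dom C h = Cod C f \<longrightarrow> h \<cdot> f = h \<cdot> g \<longrightarrow>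
        (\<exists>!u. u \<in> hom C (Cod C q) (Cod C h) \<and> u \<cdot> q = h)"
    using assms(1) unfolding is_coequalizer_def by (elim conjE)
  then show ?thesis using assms(2-4) by blast
qed

lemma coequalizerI:
  assumes "f \<in> Arr C" "g \<in> Arr C" "q \<in> Arr C" "Dom C f = Dom C g" "Cod C f = Cod C g"
    "Dom C q = Cod C f" "q \<cdot> f = q \<cdot> g"
    and "\<And>h. h \<in> Arr C \<Longrightarrow> Dom C h = Cod C f \<Longrightarrow> h \<cdot> f = h \<cdot> g
       \<Longrightarrow> \<exists>!u. u \<in> hom C (Cod C q) (Cod C h) \<and> u \<cdot> q = h"
  shows "is_coequalizer C f g q"
  unfolding is_coequalizer_def using assms by blast

lemma regular_epiI: "is_coequalizer C f g q \<Longrightarrow> regular_epi C q"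
  unfolding regular_epi_def by blast

lemma regular_epiE:
  assumes "regular_epi C q" obtains f g where "is_coequalizer C f g q"
  using assms unfolding regular_epi_def by blast

lemma coequalizer_epic:
  assumes c: "is_coequalizer C f g q" shows "epic q"
proof (rule epicI)
  note p = coequalizerD[OF c]
  show "q \<in> Arr C" using p by blast
  have qh: "q \<in> hom C (Cod C f) (Cod C q)" and fh: "f \<in> hom C (Dom C f) (Cod C f)"
    and gh: "g \<in> hom C (Dom C f) (Cod C f)" using p by (simp_all add: hom_def)
  fix b x y assume x: "x \<in> hom C (Cod C q) b" and y: "y \<in> hom C (Cod C q) b" and e: "x \<cdot> q = y \<cdot> q"
  have "(x \<cdot> q) \<cdot> f = (x \<cdot> q) \<cdot> g"
    using assoc_hom[OF fh qh x] assoc_hom[OF gh qh x] p(7) by simp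
  then have "\<exists>!u. u \<in> hom C (Cod C q) (Cod C (x \<cdot> q)) \<and> u \<cdot> q = x \<cdot> q"
    using coequalizer_ex1[OF c, of "x \<cdot> q"] comp_hom[OF qh x] by (simp add: hom_def)
  then show "x = y" using x y e comp_hom[OF qh x] by (auto simp: hom_def)
qed

lemma regular_epi_epic: "regular_epi C q \<Longrightarrow> epic q"
  using coequalizer_epic regular_epiE by blast

lemma regular_epi_pullback:
  assumes "is_pullback C q g p1 p2" "regular_epi C q" shows "regular_epi C p2"
  using semi_abelian assms unfolding semi_abelian_def barr_exact_def regular_cat_def by blast

lemma kernel_pair_coequalizer:
  assumes "is_pullback C f f r1 r2" obtains q where "is_coequalizer C r1 r2 q"
  using semi_abelian assms
  unfolding semi_abelian_def barr_exact_def regular_cat_def is_kernel_pair_def by blast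

definition strong_epi :: "'m \<Rightarrow> bool" where
  "strong_epi e \<longleftrightarrow> e \<in> Arr C \<and>
     (\<forall>n u v. monic n \<longrightarrow> u \<in> hom C (Dom C e) (Dom C n) \<longrightarrow> v \<in> hom C (Cod C e) (Cod C n) \<longrightarrow>
        v \<cdot> e = n \<cdot> u \<longrightarrow> (\<exists>d. d \<in> hom C (Cod C e) (Dom C n) \<and> n \<cdot> d = v \<and> d \<cdot> e = u))"

lemma strong_epiI:
  "e \<in> Arr C \<Longrightarrow> (\<And>n u v. monic n \<Longrightarrow> u \<in> hom C (Dom C e) (Dom C n) \<Longrightarrow> v \<in> hom C (Cod C e) (Cod C n)
     \<Longrightarrow> v \<cdot> e = n \<cdot> u \<Longrightarrow> \<exists>d. d \<in> hom C (Cod C e) (Dom C n) \<and> n \<cdot> d = v \<and> d \<cdot> e = u)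
   \<Longrightarrow> strong_epi e"
  unfolding strong_epi_def by blast

lemma strong_epiD:
  assumes "strong_epi e" "monic n" "u \<in> hom C (Dom C e) (Dom C n)" "v \<in> hom C (Cod C e) (Cod C n)"
    "v \<cdot> e = n \<cdot> u"
  obtains d where "d \<in> hom C (Cod C e) (Dom C n)" "n \<cdot> d = v" "d \<cdot> e = u"
  using assms unfolding strong_epi_def by blast

lemma strong_epi_arr: "strong_epi e \<Longrightarrow> e \<in> Arr C"
  unfolding strong_epi_def by blast

lemma regular_epi_strong:
  assumes r: "regular_epi C e" shows "strong_epi e"
proof -
  obtain f g where c: "is_coequalizer C f g e" using regular_epiE[OF r] .
  note p = coequalizerD[OF c]
  have eh: "e \<in> hom C (Cod C f) (Cod C e)" and fh: "f \<in> hom C (Dom C f) (Cod C f)"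
    and gh: "g \<in> hom C (Dom C f) (Cod C f)" using p by (simp_all add: hom_def)
  show ?thesis
  proof (rule strong_epiI)
    show "e \<in> Arr C" using p by blast
    fix n u v assume n: "monic n" and u: "u \<in> hom C (Dom C e) (Dom C n)"
      and v: "v \<in> hom C (Cod C e) (Cod C n)" and vu: "v \<cdot> e = n \<cdot> u"
    have u': "u \<in> hom C (Cod C f) (Dom C n)" using u p by simp
    have nh: "n \<in> hom C (Dom C n) (Cod C n)" using monic_arr[OF n] by (simp add: hom_def)
    have "n \<cdot> (u \<cdot> f) = n \<cdot> (u \<cdot> g)"
      using precomp_square[OF vu eh v u' nh fh] precomp_square[OF vu eh v u' nh gh] p(7) by simp
    then have "u \<cdot> f = u \<cdot> g" using monicD[OF n comp_hom[OF fh u'] comp_hom[OF gh u']] by simp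
    then obtain d where dh: "d \<in> hom C (Cod C e) (Dom C n)" and de: "d \<cdot> e = u"
      using coequalizer_ex1[OF c, of u] u' by (auto simp: hom_def)
    have "(n \<cdot> d) \<cdot> e = v \<cdot> e" using assoc_hom[OF eh dh nh] de vu by simp
    then have "n \<cdot> d = v" using epicD[OF coequalizer_epic[OF c] comp_hom[OF dh nh] v] by simp
    then show "\<exists>d. d \<in> hom C (Cod C e) (Dom C n) \<and> n \<cdot> d = v \<and> d \<cdot> e = u" using dh de by blast
  qed
qed

lemma regular_epi_comp_epic:
  assumes "regular_epi C e" "regular_epi C e'" "Cod C e = Dom C e'"
  shows "epic (e' \<cdot> e)"
  using epic_comp regular_epi_epic assms by blast

text \<open>This is how regularity substitutes for elements.\<close>
lemma regular_epi_lift_pair: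
  assumes eR: "regular_epi C e" and eh: "e \<in> hom C A I" and u1: "u1 \<in> hom C S I" and u2: "u2 \<in> hom C S I"
  obtains P \<rho> \<pi>1 \<pi>2 where "epic \<rho>" "\<rho> \<in> hom C P S" "\<pi>1 \<in> hom C P A" "\<pi>2 \<in> hom C P A"
    "e \<cdot> \<pi>1 = u1 \<cdot> \<rho>" "e \<cdot> \<pi>2 = u2 \<cdot> \<rho>"
proof -
  have "e \<in> Arr C" "u1 \<in> Arr C" "Cod C e = Cod C u1" using eh u1 by (simp_all add: hom_def)
  then obtain \<pi> \<rho>1 where pb1: "is_pullback C e u1 \<pi> \<rho>1" by (rule pullback_exists)
  note pa = pullbackD[OF pb1]
  define P1 where "P1 = Dom C \<pi>"
  have \<pi>h: "\<pi> \<in> hom C P1 A" and \<rho>1h: "\<rho>1 \<in> hom C P1 S" using pa eh u1 by (simp_all add: hom_def P1_def)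
  have "u2 \<cdot> \<rho>1 \<in> Arr C" "Cod C e = Cod C (u2 \<cdot> \<rho>1)" using comp_hom[OF \<rho>1h u2] eh by (simp_all add: hom_def)
  then obtain \<pi>2 \<rho>2 where pb2: "is_pullback C e (u2 \<cdot> \<rho>1) \<pi>2 \<rho>2"
    using pullback_exists \<open>e \<in> Arr C\<close> by blast
  note pa2 = pullbackD[OF pb2]
  define P where "P = Dom C \<pi>2"
  have \<pi>2h: "\<pi>2 \<in> hom C P A" and \<rho>2h: "\<rho>2 \<in> hom C P P1"
    using pa2 eh comp_hom[OF \<rho>1h u2] by (simp_all add: hom_def P_def)
  have "epic (\<rho>1 \<cdot> \<rho>2)"
    using regular_epi_comp_epic[OF regular_epi_pullback[OF pb2 eR] regular_epi_pullback[OF pb1 eR]] \<rho>1h \<rho>2h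
    by (simp add: hom_def)
  moreover have "e \<cdot> (\<pi> \<cdot> \<rho>2) = u1 \<cdot> (\<rho>1 \<cdot> \<rho>2)" using precomp_square[OF pa(9) \<pi>h eh \<rho>1h u1 \<rho>2h] .
  moreover have "e \<cdot> \<pi>2 = u2 \<cdot> (\<rho>1 \<cdot> \<rho>2)" using pa2(9) assoc_hom[OF \<rho>2h \<rho>1h u2] by simp
  ultimately show ?thesis using that comp_hom[OF \<rho>2h \<rho>1h] comp_hom[OF \<rho>2h \<pi>h] \<pi>2h by blast
qed

lemma coequalizer_kernel_pair_factor_monic:
  assumes kp: "is_pullback C f f r1 r2" and c: "is_coequalizer C r1 r2 e"
    and eh: "e \<in> hom C A I" and mh: "m \<in> hom C I B" and me: "m \<cdot> e = f"
  shows "monic m"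
proof (rule monicI)
  show "m \<in> Arr C" using mh by (simp add: hom_def)
  note ka = pullbackD[OF kp] and cp = coequalizerD[OF c]
  have fh: "f \<in> hom C A B" using comp_hom[OF eh mh] me by simp
  have r1h: "r1 \<in> hom C (Dom C r1) A" and r2h: "r2 \<in> hom C (Dom C r1) A"
    using ka fh by (simp_all add: hom_def)
  fix Z x y assume x: "x \<in> hom C Z (Dom C m)" and y: "y \<in> hom C Z (Dom C m)" and mxy: "m \<cdot> x = m \<cdot> y"
  have mA: "m \<in> Arr C" using mh by (simp add: hom_def)
  obtain u1 u2 where kpm: "is_pullback C m m u1 u2" using pullback_exists[OF mA mA] by blast
  note ua = pullbackD[OF kpm]
  define S where "S = Dom C u1"
  have u1h: "u1 \<in> hom C S I" and u2h: "u2 \<in> hom C S I" using ua mh by (simp_all add: hom_def S_def)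
  have x': "x \<in> hom C Z (Dom C m)" and y': "y \<in> hom C Z (Dom C m)" using x y .
  obtain w where "w \<in> hom C Z (Dom C u1)" and w: "u1 \<cdot> w = x" "u2 \<cdot> w = y"
    by (rule pullback_lift[OF kpm x' y' mxy])
  obtain P \<rho> \<pi>1 \<pi>2 where \<rho>: "epic \<rho>" "\<rho> \<in> hom C P S" and \<pi>1h: "\<pi>1 \<in> hom C P A" and \<pi>2h: "\<pi>2 \<in> hom C P A"
    and e1: "e \<cdot> \<pi>1 = u1 \<cdot> \<rho>" and e2: "e \<cdot> \<pi>2 = u2 \<cdot> \<rho>"
    by (rule regular_epi_lift_pair[OF regular_epiI[OF c] eh u1h u2h])
  have "f \<cdot> \<pi>1 = m \<cdot> (u1 \<cdot> \<rho>)" using precomp_eq[OF me eh mh \<pi>1h] e1 by simp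
  also have "\<dots> = m \<cdot> (u2 \<cdot> \<rho>)" using precomp_square[OF ua(9) u1h mh u2h mh \<rho>(2)] .
  also have "\<dots> = f \<cdot> \<pi>2" using precomp_eq[OF me eh mh \<pi>2h] e2 by simp
  finally have "f \<cdot> \<pi>1 = f \<cdot> \<pi>2" .
  moreover have "\<pi>1 \<in> hom C P (Dom C f)" "\<pi>2 \<in> hom C P (Dom C f)" using \<pi>1h \<pi>2h fh by (simp_all add: hom_def)
  ultimately obtain v where v: "v \<in> hom C P (Dom C r1)" "r1 \<cdot> v = \<pi>1" "r2 \<cdot> v = \<pi>2"
    using pullback_lift[OF kp] by metis
  have "u1 \<cdot> \<rho> = e \<cdot> (r1 \<cdot> v)" using e1 v(2) by simp
  also have "\<dots> = e \<cdot> (r2 \<cdot> v)" using precomp_square[OF cp(7) r1h eh r2h eh v(1)] .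
  also have "\<dots> = u2 \<cdot> \<rho>" using e2 v(3) by simp
  finally have "u1 \<cdot> \<rho> = u2 \<cdot> \<rho>" .
  moreover have "u1 \<in> hom C (Cod C \<rho>) I" "u2 \<in> hom C (Cod C \<rho>) I" using \<rho>(2) u1h u2h by (simp_all add: hom_def)
  ultimately have "u1 = u2" using epicD[OF \<rho>(1)] by blast
  then show "x = y" using w by simp
qed

lemma image_factorisation:
  assumes f: "f \<in> Arr C"
  obtains e m where "regular_epi C e" "monic m" "e \<in> hom C (Dom C f) (Dom C m)"
    "m \<in> hom C (Dom C m) (Cod C f)" "m \<cdot> e = f"
proof -
  obtain r1 r2 where kp: "is_pullback C f f r1 r2" using pullback_exists[OF f f] by blast
  obtain e where c: "is_coequalizer C r1 r2 e" using kernel_pair_coequalizer[OF kp] by blast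
  note ka = pullbackD[OF kp] and cp = coequalizerD[OF c]
  have eh: "e \<in> hom C (Dom C f) (Cod C e)" using cp ka by (simp add: hom_def)
  obtain m where mh: "m \<in> hom C (Cod C e) (Cod C f)" and me: "m \<cdot> e = f"
    using coequalizer_ex1[OF c f] ka by auto
  have "monic m" using coequalizer_kernel_pair_factor_monic[OF kp c eh mh me] .
  then show ?thesis using that[OF regular_epiI[OF c]] eh mh me by (simp add: hom_def)
qed

lemma regular_epi_comp_iso:
  assumes r: "regular_epi C e" and i: "iso C m" and c: "Cod C e = Dom C m"
  shows "regular_epi C (m \<cdot> e)"
proof -
  obtain a b where ce: "is_coequalizer C a b e" using regular_epiE[OF r] .
  note p = coequalizerD[OF ce]
  obtain d where dh: "d \<in> hom C (Cod C m) (Dom C m)" and dm: "d \<cdot> m = Idm C (Dom C m)"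
    using iso_inv[OF i] by blast
  define X Y Z where "X = Cod C a" and "Y = Dom C m" and "Z = Cod C m"
  have eh: "e \<in> hom C X Y" using p c by (simp add: hom_def X_def Y_def)
  have mh: "m \<in> hom C Y Z" using i by (simp add: iso_def hom_def Y_def Z_def)
  have dh': "d \<in> hom C Z Y" using dh by (simp add: Y_def Z_def)
  have ah: "a \<in> hom C (Dom C a) X" and bh: "b \<in> hom C (Dom C a) X" using p by (simp_all add: hom_def X_def)
  have meh: "m \<cdot> e \<in> hom C X Z" using comp_hom[OF eh mh] .
  show ?thesis
  proof (rule regular_epiI, rule coequalizerI)
    show "a \<in> Arr C" "b \<in> Arr C" "Dom C a = Dom C b" "Cod C a = Cod C b" using p by simp_all
    show "m \<cdot> e \<in> Arr C" "Dom C (m \<cdot> e) = Cod C a" using meh by (simp_all add: hom_def X_def)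
    show "(m \<cdot> e) \<cdot> a = (m \<cdot> e) \<cdot> b" using assoc_hom[OF ah eh mh] assoc_hom[OF bh eh mh] p by simp
    fix h assume hA: "h \<in> Arr C" and hd: "Dom C h = Cod C a" and hab: "h \<cdot> a = h \<cdot> b"
    obtain u where uh: "u \<in> hom C Y (Cod C h)" and ue: "u \<cdot> e = h"
      using coequalizer_ex1[OF ce hA hd hab] c by (auto simp: Y_def)
    have udh: "u \<cdot> d \<in> hom C Z (Cod C h)" using comp_hom[OF dh' uh] .
    have "(u \<cdot> d) \<cdot> (m \<cdot> e) = u \<cdot> ((d \<cdot> m) \<cdot> e)" using assoc_hom[OF meh dh' uh] assoc_hom[OF eh mh dh'] by simp
    also have "\<dots> = h" using dm idl_hom[OF eh] ue by (simp add: Y_def)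
    finally have E: "(u \<cdot> d) \<cdot> (m \<cdot> e) = h" .
    have CZ: "Cod C (m \<cdot> e) = Z" using meh by (simp add: hom_def)
    show "\<exists>!u. u \<in> hom C (Cod C (m \<cdot> e)) (Cod C h) \<and> u \<cdot> (m \<cdot> e) = h"
    proof (rule ex1I[of _ "u \<cdot> d"])
      show "u \<cdot> d \<in> hom C (Cod C (m \<cdot> e)) (Cod C h) \<and> (u \<cdot> d) \<cdot> (m \<cdot> e) = h" using udh E CZ by simp
      fix w assume w: "w \<in> hom C (Cod C (m \<cdot> e)) (Cod C h) \<and> w \<cdot> (m \<cdot> e) = h"
      have wh: "w \<in> hom C Z (Cod C h)" using w CZ by simp
      have "(w \<cdot> m) \<cdot> e = ((u \<cdot> d) \<cdot> m) \<cdot> e"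
        using assoc_hom[OF eh mh wh] assoc_hom[OF eh mh udh] w E by simp
      then have "w \<cdot> m = (u \<cdot> d) \<cdot> m"
        using epicD[OF regular_epi_epic[OF r]] comp_hom[OF mh wh] comp_hom[OF mh udh] eh by (simp add: hom_def)
      moreover have "w \<in> hom C (Cod C m) (Cod C h)" "u \<cdot> d \<in> hom C (Cod C m) (Cod C h)"
        using wh udh by (simp_all add: Z_def)
      ultimately show "w = u \<cdot> d" using epicD[OF iso_epic[OF i]] by blast
    qed
  qed
qed

lemma strong_epi_regular:
  assumes s: "strong_epi f" shows "regular_epi C f"
proof -
  have f: "f \<in> Arr C" using strong_epi_arr[OF s] .
  obtain e m where eR: "regular_epi C e" and mon: "monic m" and eh: "e \<in> hom C (Dom C f) (Dom C m)"
    and mh: "m \<in> hom C (Dom C m) (Cod C f)" and me: "m \<cdot> e = f" using image_factorisation[OF f] by blast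
  have idh: "Idm C (Cod C f) \<in> hom C (Cod C f) (Cod C m)" using mh id_hom[of "Cod C f"] f by (simp add: hom_def)
  have "Idm C (Cod C f) \<cdot> f = m \<cdot> e" using me f by simp
  then obtain d where dh: "d \<in> hom C (Cod C f) (Dom C m)" and md: "m \<cdot> d = Idm C (Cod C f)"
    using strong_epiD[OF s mon, of e "Idm C (Cod C f)"] eh idh by blast
  have "iso C m" using monic_split_epi_iso[OF mon] dh md mh by (simp add: hom_def)
  moreover have "Cod C e = Dom C m" using eh by (simp add: hom_def)
  ultimately show ?thesis using regular_epi_comp_iso[OF eR] me by blast
qed

section \<open>Protomodularity\<close>

lemma kernel_pullback_zero:
  assumes k: "is_kernel C p \<kappa>"
  shows "is_pullback C (zero_arr zero_obj (Cod C p)) p (zero_arr (Dom C \<kappa>) zero_obj) \<kappa>"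
proof -
  note kp = kernelD[OF k]
  define K A B where "K = Dom C \<kappa>" and "A = Dom C p" and "B = Cod C p"
  have KO: "K \<in> Obj C" and BO: "B \<in> Obj C" using kp by (simp_all add: K_def B_def)
  have "\<kappa> \<in> hom C K A" "p \<in> hom C A B" using kp by (simp_all add: hom_def K_def A_def B_def)
  show ?thesis unfolding K_def[symmetric] B_def[symmetric]
  proof (rule pullbackI)
    show "zero_arr zero_obj B \<in> hom C zero_obj B" "zero_arr K zero_obj \<in> hom C K zero_obj"
      using KO BO zero_arr_hom by simp_all
    show "p \<in> hom C A B" "\<kappa> \<in> hom C K A" by fact+
    show "zero_arr zero_obj B \<cdot> zero_arr K zero_obj = p \<cdot> \<kappa>" using kp KO by (simp add: K_def B_def)
    fix W q1 q2 assume q1: "q1 \<in> hom C W zero_obj" and q2: "q2 \<in> hom C W A"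
      and e: "zero_arr zero_obj B \<cdot> q1 = p \<cdot> q2"
    have "p \<cdot> q2 = zero_arr W (Cod C p)" using e[symmetric] q1 BO by (simp add: hom_def B_def)
    then obtain w where wh: "w \<in> hom C W K" and kw: "\<kappa> \<cdot> w = q2"
      using kernel_lift[OF k, of q2 W] q2 by (auto simp: A_def K_def)
    have "zero_arr K zero_obj \<cdot> w = q1"
      using to_zero_obj_unique[OF comp_hom[OF wh zero_arr_hom[OF KO zero_obj_Obj]] q1] .
    then show "\<exists>u. u \<in> hom C W K \<and> zero_arr K zero_obj \<cdot> u = q1 \<and> \<kappa> \<cdot> u = q2" using wh kw by blast
  next
    fix W u v assume "u \<in> hom C W K" "v \<in> hom C W K" "\<kappa> \<cdot> u = \<kappa> \<cdot> v"
    then show "u = v" using monicD[OF kernel_monic[OF k]] by (simp add: K_def)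
  qed
qed

text \<open>This is the only use of the protomodularity axiom.\<close>
lemma split_short_five:
  assumes ph: "p \<in> hom C A B" and "s \<in> hom C B A" "p \<cdot> s = Idm C B"
    and p'h: "p' \<in> hom C A' B" and "s' \<in> hom C B A'" "p' \<cdot> s' = Idm C B"
    and "\<phi> \<in> hom C A A'" "p' \<cdot> \<phi> = p" "\<phi> \<cdot> s = s'"
    and k: "is_kernel C p \<kappa>" and k': "is_kernel C p' \<kappa>'"
    and uh: "u \<in> hom C (Dom C \<kappa>) (Dom C \<kappa>')" and u: "iso C u" and \<kappa>'u: "\<kappa>' \<cdot> u = \<phi> \<cdot> \<kappa>"
  shows "iso C \<phi>"
proof -
  have BO: "B \<in> Obj C" using ph hom_obj by blast
  have KO: "Dom C \<kappa> \<in> Obj C" and K'O: "Dom C \<kappa>' \<in> Obj C"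
    using kernelD(2)[OF k] kernelD(2)[OF k'] by simp_all
  have "is_pullback C (zero_arr zero_obj B) p (zero_arr (Dom C \<kappa>) zero_obj) \<kappa>"
    "is_pullback C (zero_arr zero_obj B) p' (zero_arr (Dom C \<kappa>') zero_obj) \<kappa>'"
    using kernel_pullback_zero[OF k] kernel_pullback_zero[OF k'] ph p'h by (simp_all add: hom_def)
  have "protomodular C" using semi_abelian by (simp add: semi_abelian_def)
  then show ?thesis
    unfolding protomodular_def
  proof (elim allE impE)
    show "zero_arr zero_obj B \<in> Arr C" "p \<in> Arr C" "s \<in> Arr C" "p' \<in> Arr C" "s' \<in> Arr C"
      "Cod C p = Cod C (zero_arr zero_obj B)" "Cod C p' = Cod C (zero_arr zero_obj B)"
      "s \<in> hom C (Cod C (zero_arr zero_obj B)) (Dom C p)" "s' \<in> hom C (Cod C (zero_arr zero_obj B)) (Dom C p')"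
      "p \<cdot> s = Idm C (Cod C (zero_arr zero_obj B))" "p' \<cdot> s' = Idm C (Cod C (zero_arr zero_obj B))"
      "\<phi> \<in> hom C (Dom C p) (Dom C p')" "p' \<cdot> \<phi> = p" "\<phi> \<cdot> s = s'"
      using assms BO by (simp_all add: hom_def)
    show "is_pullback C (zero_arr zero_obj B) p (zero_arr (Dom C \<kappa>) zero_obj) \<kappa>"
      "is_pullback C (zero_arr zero_obj B) p' (zero_arr (Dom C \<kappa>') zero_obj) \<kappa>'" by fact+
    show "u \<in> hom C (Dom C (zero_arr (Dom C \<kappa>) zero_obj)) (Dom C (zero_arr (Dom C \<kappa>') zero_obj))"
      "zero_arr (Dom C \<kappa>') zero_obj \<cdot> u = zero_arr (Dom C \<kappa>) zero_obj" "\<kappa>' \<cdot> u = \<phi> \<cdot> \<kappa>" "iso C u"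
      using uh u \<kappa>'u KO K'O by (simp_all add: hom_def)
  qed
qed

lemma kernel_section_jointly_strongly_epic:
  assumes ph: "p \<in> hom C A B" and sh: "s \<in> hom C B A" and ps: "p \<cdot> s = Idm C B"
    and k: "is_kernel C p \<kappa>" and n: "monic n" and nh: "n \<in> hom C J A"
    and s0h: "s0 \<in> hom C B J" and ns0: "n \<cdot> s0 = s"
    and \<kappa>0h: "\<kappa>0 \<in> hom C (Dom C \<kappa>) J" and n\<kappa>0: "n \<cdot> \<kappa>0 = \<kappa>"
  shows "iso C n"
proof -
  note kp = kernelD[OF k]
  define K where "K = Dom C \<kappa>"
  have KO: "K \<in> Obj C" using kp by (simp add: K_def)
  have kh: "\<kappa> \<in> hom C K A" using kp ph by (simp add: hom_def K_def)
  have k0h: "\<kappa>0 \<in> hom C K J" using \<kappa>0h by (simp add: K_def)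
  have pnh: "p \<cdot> n \<in> hom C J B" using comp_hom[OF nh ph] .
  have k0: "is_kernel C (p \<cdot> n) \<kappa>0"
  proof (rule kernelI)
    show "p \<cdot> n \<in> Arr C" "\<kappa>0 \<in> Arr C" "Cod C \<kappa>0 = Dom C (p \<cdot> n)" using pnh k0h by (simp_all add: hom_def)
    show "(p \<cdot> n) \<cdot> \<kappa>0 = zero_arr (Dom C \<kappa>0) (Cod C (p \<cdot> n))"
      using assoc_hom[OF k0h nh ph] n\<kappa>0 kp pnh k0h ph by (simp add: hom_def K_def)
    show "monic \<kappa>0" using monic_comp_cancel[OF _ k0h nh] n\<kappa>0 kernel_monic[OF k] by simp
    fix Z q assume q: "q \<in> hom C Z (Dom C (p \<cdot> n))" and z: "(p \<cdot> n) \<cdot> q = zero_arr Z (Cod C (p \<cdot> n))"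
    have qh: "q \<in> hom C Z J" using q pnh by (simp add: hom_def)
    have "p \<cdot> (n \<cdot> q) = zero_arr Z (Cod C p)" using assoc_hom[OF qh nh ph] z pnh ph by (simp add: hom_def)
    then obtain w where wh: "w \<in> hom C Z K" and kw: "\<kappa> \<cdot> w = n \<cdot> q"
      using kernel_lift[OF k, of "n \<cdot> q" Z] comp_hom[OF qh nh] ph by (auto simp: hom_def K_def)
    have "n \<cdot> (\<kappa>0 \<cdot> w) = n \<cdot> q" using assoc_hom[OF wh k0h nh] n\<kappa>0 kw by simp
    then have "\<kappa>0 \<cdot> w = q" using monicD[OF n] comp_hom[OF wh k0h] qh nh by (simp add: hom_def)
    then show "\<exists>u. u \<in> hom C Z (Dom C \<kappa>0) \<and> \<kappa>0 \<cdot> u = q" using wh k0h by (auto simp: hom_def)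
  qed
  show ?thesis
  proof (rule split_short_five[OF pnh s0h _ ph sh ps nh refl ns0 k0 k])
    show "(p \<cdot> n) \<cdot> s0 = Idm C B" using assoc_hom[OF s0h nh ph] ns0 ps by simp
    show "Idm C K \<in> hom C (Dom C \<kappa>0) (Dom C \<kappa>)" "iso C (Idm C K)" "\<kappa> \<cdot> Idm C K = n \<cdot> \<kappa>0"
      using id_hom[OF KO] iso_Idm[OF KO] k0h kh n\<kappa>0 by (simp_all add: hom_def K_def)
  qed
qed

lemma split_epi_jointly_epic:
  assumes ph: "p \<in> hom C A B" and sh: "s \<in> hom C B A" and ps: "p \<cdot> s = Idm C B"
    and k: "is_kernel C p \<kappa>" and xh: "x \<in> hom C A G" and yh: "y \<in> hom C A G"
    and xs: "x \<cdot> s = y \<cdot> s" and x\<kappa>: "x \<cdot> \<kappa> = y \<cdot> \<kappa>"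
  shows "x = y"
proof -
  obtain e E where eh: "e \<in> hom C E A" and em: "monic e" and ee: "x \<cdot> e = y \<cdot> e"
    and eu: "\<And>Z z. z \<in> hom C Z A \<Longrightarrow> x \<cdot> z = y \<cdot> z \<Longrightarrow> \<exists>w. w \<in> hom C Z E \<and> e \<cdot> w = z"
    using equalizer_exists[OF xh yh] by blast
  have \<kappa>h: "\<kappa> \<in> hom C (Dom C \<kappa>) A" using kernelD[OF k] ph by (simp add: hom_def)
  obtain s0 where "s0 \<in> hom C B E" "e \<cdot> s0 = s" using eu[OF sh xs] by blast
  moreover obtain \<kappa>0 where "\<kappa>0 \<in> hom C (Dom C \<kappa>) E" "e \<cdot> \<kappa>0 = \<kappa>" using eu[OF \<kappa>h x\<kappa>] by blast
  ultimately have "iso C e" using kernel_section_jointly_strongly_epic[OF ph sh ps k em eh] by blast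
  then show ?thesis using epicD[OF iso_epic, of e x G y] ee eh xh yh by (simp add: hom_def)
qed

lemma kernel_pair_kernel:
  assumes kp: "is_pullback C q q r1 r2" and k: "is_kernel C q k"
    and \<kappa>h: "\<kappa> \<in> hom C (Dom C k) (Dom C r1)" and r1\<kappa>: "r1 \<cdot> \<kappa> = zero_arr (Dom C k) (Dom C q)"
    and r2\<kappa>: "r2 \<cdot> \<kappa> = k"
  shows "is_kernel C r1 \<kappa>"
proof (rule kernelI)
  note ra = pullbackD[OF kp]
  define K A R where "K = Dom C k" and "A = Dom C q" and "R = Dom C r1"
  have r1h: "r1 \<in> hom C R A" and r2h: "r2 \<in> hom C R A" and qh: "q \<in> hom C A (Cod C q)"
    using ra by (simp_all add: hom_def R_def A_def)
  have \<kappa>h': "\<kappa> \<in> hom C K R" using \<kappa>h by (simp add: K_def R_def)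
  show "r1 \<in> Arr C" "\<kappa> \<in> Arr C" "Cod C \<kappa> = Dom C r1" using ra \<kappa>h by (simp_all add: hom_def)
  show "r1 \<cdot> \<kappa> = zero_arr (Dom C \<kappa>) (Cod C r1)" using r1\<kappa> \<kappa>h ra by (simp add: hom_def)
  show "monic \<kappa>" using monic_comp_cancel[OF _ \<kappa>h' r2h] r2\<kappa> kernel_monic[OF k] by simp
  fix Z z assume z: "z \<in> hom C Z (Dom C r1)" and zz: "r1 \<cdot> z = zero_arr Z (Cod C r1)"
  have ZO: "Z \<in> Obj C" using hom_obj[OF z] by simp
  have "q \<cdot> (r2 \<cdot> z) = q \<cdot> (r1 \<cdot> z)" using precomp_square[OF ra(9)[symmetric] r2h qh r1h qh] z by (simp add: R_def)
  also have "\<dots> = zero_arr Z (Cod C q)" using zz r1h qh ZO by (simp add: hom_def)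
  finally obtain w where wh: "w \<in> hom C Z K" and kw: "k \<cdot> w = r2 \<cdot> z"
    using kernel_lift[OF k, of "r2 \<cdot> z" Z] comp_hom[of z Z R r2 A] z r2h by (auto simp: A_def K_def R_def)
  have "\<kappa> \<cdot> w = z"
  proof (rule pullback_uniq[OF kp])
    show "\<kappa> \<cdot> w \<in> hom C Z (Dom C r1)" "z \<in> hom C Z (Dom C r1)" using comp_hom[OF wh \<kappa>h'] z by (simp_all add: R_def)
    show "r1 \<cdot> (\<kappa> \<cdot> w) = r1 \<cdot> z" using precomp_eq[OF r1\<kappa> \<kappa>h' r1h wh] zz r1h wh ZO kernelD(1)[OF k] by (simp add: hom_def A_def K_def)
    show "r2 \<cdot> (\<kappa> \<cdot> w) = r2 \<cdot> z" using precomp_eq[OF r2\<kappa> \<kappa>h' r2h wh] kw by simp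
  qed
  then show "\<exists>u. u \<in> hom C Z (Dom C \<kappa>) \<and> \<kappa> \<cdot> u = z" using wh \<kappa>h' by (auto simp: hom_def)
qed

text \<open>An arrow killing the kernel agrees on the two projections of the kernel pair, since these agree
  on its diagonal and on the kernel of the first one.\<close>
lemma regular_epi_normal:
  assumes qR: "regular_epi C q" shows "normal_epi C q"
proof -
  obtain a b where cab: "is_coequalizer C a b q" using regular_epiE[OF qR] .
  note cp = coequalizerD[OF cab]
  define A B where "A = Dom C q" and "B = Cod C q"
  have qh: "q \<in> hom C A B" using cp by (simp add: hom_def A_def B_def)
  have ah: "a \<in> hom C (Dom C a) A" and bh: "b \<in> hom C (Dom C a) A" using cp by (simp_all add: hom_def A_def)
  have AO: "A \<in> Obj C" using hom_obj[OF qh] by simp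
  obtain k where kk: "is_kernel C q k" using kernel_exists[OF cp(3)] .
  define K where "K = Dom C k"
  have kh: "k \<in> hom C K A" using kernelD[OF kk] by (simp add: hom_def K_def A_def)
  have KO: "K \<in> Obj C" using hom_obj[OF kh] by simp
  obtain r1 r2 where kp: "is_pullback C q q r1 r2" using pullback_exists[OF cp(3) cp(3)] by blast
  note ra = pullbackD[OF kp]
  define R where "R = Dom C r1"
  have r1h: "r1 \<in> hom C R A" and r2h: "r2 \<in> hom C R A" using ra by (simp_all add: hom_def R_def A_def)
  have lift: "\<exists>t. t \<in> hom C Z R \<and> r1 \<cdot> t = u \<and> r2 \<cdot> t = v"
    if "u \<in> hom C Z A" "v \<in> hom C Z A" "q \<cdot> u = q \<cdot> v" for Z u v
    using pullback_lift[OF kp, of u Z v] that by (auto simp: A_def R_def)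
  obtain \<delta> where \<delta>h: "\<delta> \<in> hom C A R" and \<delta>1: "r1 \<cdot> \<delta> = Idm C A" and \<delta>2: "r2 \<cdot> \<delta> = Idm C A"
    using lift[OF id_hom[OF AO] id_hom[OF AO]] by blast
  have "q \<cdot> zero_arr K A = q \<cdot> k" using kernelD(4)[OF kk] qh KO AO by (simp add: hom_def K_def)
  then obtain \<kappa> where \<kappa>h: "\<kappa> \<in> hom C K R" and \<kappa>1: "r1 \<cdot> \<kappa> = zero_arr K A" and \<kappa>2: "r2 \<cdot> \<kappa> = k"
    using lift[OF zero_arr_hom[OF KO AO] kh] by blast
  have k\<kappa>: "is_kernel C r1 \<kappa>"
    using kernel_pair_kernel[OF kp kk] \<kappa>h \<kappa>1 \<kappa>2 by (simp add: K_def R_def A_def)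
  show ?thesis unfolding normal_epi_def
  proof (intro exI cokernelI)
    show "k \<in> Arr C" "q \<in> Arr C" "Dom C q = Cod C k" "is_zero C (q \<cdot> k)"
      using kernelD[OF kk] is_zero_zero_arr KO hom_obj[OF qh] by (simp_all add: K_def)
    fix g assume gA: "g \<in> Arr C" and gd: "Dom C g = Cod C k" and gz: "is_zero C (g \<cdot> k)"
    have gh: "g \<in> hom C A (Cod C g)" using gA gd kh by (simp add: hom_def)
    have "(g \<cdot> r1) \<cdot> \<kappa> = (g \<cdot> r2) \<cdot> \<kappa>"
      using assoc_hom[OF \<kappa>h r1h gh] assoc_hom[OF \<kappa>h r2h gh] \<kappa>1 \<kappa>2 is_zeroD[OF gz] gh kh KO
      by (simp add: hom_def)
    moreover have "(g \<cdot> r1) \<cdot> \<delta> = (g \<cdot> r2) \<cdot> \<delta>"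
      using assoc_hom[OF \<delta>h r1h gh] assoc_hom[OF \<delta>h r2h gh] \<delta>1 \<delta>2 by simp
    ultimately have gr: "g \<cdot> r1 = g \<cdot> r2"
      using split_epi_jointly_epic[OF r1h \<delta>h \<delta>1 k\<kappa> comp_hom[OF r1h gh] comp_hom[OF r2h gh]] by blast
    obtain t where th: "t \<in> hom C (Dom C a) R" and "r1 \<cdot> t = a" "r2 \<cdot> t = b" using lift[OF ah bh cp(7)] by blast
    then have "g \<cdot> a = g \<cdot> b" using precomp_square[OF gr r1h gh r2h gh th] by simp
    then show "\<exists>!u. u \<in> hom C (Cod C q) (Cod C g) \<and> u \<cdot> q = g"
      using coequalizer_ex1[OF cab gA] gd kh ah by (simp add: hom_def)
  qed
qed

lemma normal_epi_regular:
  assumes "normal_epi C q" shows "regular_epi C q"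
proof -
  obtain f where c: "is_cokernel C f q" using assms unfolding normal_epi_def by blast
  then have fA: "f \<in> Arr C" and qA: "q \<in> Arr C" and dq: "Dom C q = Cod C f" and qz: "is_zero C (q \<cdot> f)"
    and univ: "\<And>g. g \<in> Arr C \<Longrightarrow> Dom C g = Cod C f \<Longrightarrow> is_zero C (g \<cdot> f)
       \<Longrightarrow> \<exists>!u. u \<in> hom C (Cod C q) (Cod C g) \<and> u \<cdot> q = g"
    unfolding is_cokernel_def by blast+
  define A B where "A = Dom C f" and "B = Cod C f"
  have AO: "A \<in> Obj C" "B \<in> Obj C" using fA by (simp_all add: A_def B_def)
  have "is_coequalizer C f (zero_arr A B) q"
  proof (rule coequalizerI)
    show "f \<in> Arr C" "zero_arr A B \<in> Arr C" "q \<in> Arr C" "Dom C f = Dom C (zero_arr A B)"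
      "Cod C f = Cod C (zero_arr A B)" "Dom C q = Cod C f" using fA qA dq AO by (simp_all add: A_def B_def)
    show "q \<cdot> f = q \<cdot> zero_arr A B" using is_zeroD[OF qz] fA qA dq AO by (simp add: A_def B_def)
    fix g assume gA: "g \<in> Arr C" and gd: "Dom C g = Cod C f" and gf: "g \<cdot> f = g \<cdot> zero_arr A B"
    have "is_zero C (g \<cdot> f)" using gf gA gd AO is_zero_zero_arr by (simp add: B_def)
    then show "\<exists>!u. u \<in> hom C (Cod C q) (Cod C g) \<and> u \<cdot> q = g" using univ gA gd by blast
  qed
  then show ?thesis by (rule regular_epiI)
qed

text \<open>The pullback along \<mu> of the image of \<mu> \<cdot> \<kappa> contains the kernel and the section, hence is
  everything.\<close>
lemma regular_epi_restrict_kernel: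
  assumes qh: "q \<in> hom C M L" and sh: "s \<in> hom C L M" and qs: "q \<cdot> s = Idm C L"
    and k: "is_kernel C q \<kappa>" and \<mu>R: "regular_epi C \<mu>" and \<mu>h: "\<mu> \<in> hom C M N"
    and \<mu>s: "\<mu> \<cdot> s = zero_arr L N"
  shows "regular_epi C (\<mu> \<cdot> \<kappa>)"
proof -
  define K where "K = Dom C \<kappa>"
  have \<kappa>h: "\<kappa> \<in> hom C K M" using kernelD[OF k] qh by (simp add: hom_def K_def)
  have LO: "L \<in> Obj C" using hom_obj[OF qh] by simp
  obtain e n where eR: "regular_epi C e" and nm: "monic n" and eh0: "e \<in> hom C K (Dom C n)"
    and nh0: "n \<in> hom C (Dom C n) N" and ne: "n \<cdot> e = \<mu> \<cdot> \<kappa>"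
    using image_factorisation[of "\<mu> \<cdot> \<kappa>"] comp_hom[OF \<kappa>h \<mu>h] by (auto simp: hom_def)
  define I where "I = Dom C n"
  have eh: "e \<in> hom C K I" and nh: "n \<in> hom C I N" using eh0 nh0 by (simp_all add: I_def)
  have IO: "I \<in> Obj C" using hom_obj[OF nh] by simp
  have "\<mu> \<in> Arr C" "n \<in> Arr C" "Cod C \<mu> = Cod C n" using \<mu>h nh by (simp_all add: hom_def)
  then obtain j1 j2 where pbJ: "is_pullback C \<mu> n j1 j2" by (rule pullback_exists)
  note pj = pullbackD[OF pbJ]
  define J where "J = Dom C j1"
  have j1h: "j1 \<in> hom C J M" and j2h: "j2 \<in> hom C J I" using pj \<mu>h nh by (simp_all add: hom_def J_def I_def)
  have \<kappa>h': "\<kappa> \<in> hom C K (Dom C \<mu>)" and eh': "e \<in> hom C K (Dom C n)" and \<mu>\<kappa>: "\<mu> \<cdot> \<kappa> = n \<cdot> e"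
    using \<kappa>h eh \<mu>h nh ne by (simp_all add: hom_def I_def)
  obtain \<kappa>0 where \<kappa>0h: "\<kappa>0 \<in> hom C K (Dom C j1)" and j1\<kappa>0: "j1 \<cdot> \<kappa>0 = \<kappa>"
    by (rule pullback_lift[OF pbJ \<kappa>h' eh' \<mu>\<kappa>])
  have sh': "s \<in> hom C L (Dom C \<mu>)" and zh: "zero_arr L I \<in> hom C L (Dom C n)"
    and \<mu>s': "\<mu> \<cdot> s = n \<cdot> zero_arr L I"
    using sh \<mu>h nh \<mu>s LO IO zero_arr_hom by (simp_all add: hom_def I_def)
  obtain s0 where s0h: "s0 \<in> hom C L (Dom C j1)" and j1s0: "j1 \<cdot> s0 = s"
    by (rule pullback_lift[OF pbJ sh' zh \<mu>s'])
  have "iso C j1"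
    using kernel_section_jointly_strongly_epic[OF qh sh qs k pullback_monic[OF pbJ nm] j1h] \<kappa>0h j1\<kappa>0 s0h j1s0
    by (simp add: K_def J_def)
  then obtain d where dh0: "d \<in> hom C (Cod C j1) (Dom C j1)" and j1d0: "j1 \<cdot> d = Idm C (Cod C j1)"
    by (rule iso_inv)
  have dh: "d \<in> hom C M J" and j1d: "j1 \<cdot> d = Idm C M" using dh0 j1d0 j1h by (simp_all add: hom_def J_def)
  have "Idm C N \<cdot> \<mu> = n \<cdot> (j2 \<cdot> d)"
    using idl_hom[OF \<mu>h] idr_hom[OF \<mu>h] j1d precomp_square[OF pj(9) j1h \<mu>h j2h nh dh] by simp
  then obtain d' where d'h: "d' \<in> hom C N I" and nd': "n \<cdot> d' = Idm C N"
    using strong_epiD[OF regular_epi_strong[OF \<mu>R] nm, of "j2 \<cdot> d" "Idm C N"] comp_hom[OF dh j2h]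
      id_hom[of N] hom_obj[OF \<mu>h] \<mu>h nh by (auto simp: hom_def I_def)
  have "iso C n" using monic_split_epi_iso[OF nm] d'h nd' nh by (simp add: hom_def I_def)
  moreover have "Cod C e = Dom C n" using eh nh by (simp add: hom_def)
  ultimately have "regular_epi C (n \<cdot> e)" by (rule regular_epi_comp_iso[OF eR])
  then show ?thesis using ne by simp
qed

lemma kernel_pullback_projection:
  assumes pb: "is_pullback C \<alpha> \<kappa> \<mu>1 \<mu>" and \<alpha>h: "\<alpha> \<in> hom C X' X" and \<kappa>h: "\<kappa> \<in> hom C N X"
    and \<mu>1h: "\<mu>1 \<in> hom C M X'" and \<mu>h: "\<mu> \<in> hom C M N" and \<kappa>m: "monic \<kappa>"
    and qh: "q \<in> hom C M L" and \<iota>h: "\<iota> \<in> hom C L Y'" and \<iota>m: "monic \<iota>" and \<iota>q: "\<iota> \<cdot> q = p' \<cdot> \<mu>1"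
    and p'h: "p' \<in> hom C X' Y'" and k': "is_kernel C p' \<kappa>'"
    and \<kappa>Mh: "\<kappa>M \<in> hom C (Dom C \<kappa>') M" and \<kappa>M1: "\<mu>1 \<cdot> \<kappa>M = \<kappa>'"
  shows "is_kernel C q \<kappa>M"
proof (rule kernelI)
  note pm = pullbackD[OF pb] and kp = kernelD[OF k']
  define N' where "N' = Dom C \<kappa>'"
  have \<kappa>Mh': "\<kappa>M \<in> hom C N' M" using \<kappa>Mh by (simp add: N'_def)
  have O: "N' \<in> Obj C" "L \<in> Obj C" "Y' \<in> Obj C" using hom_obj[OF \<kappa>Mh'] hom_obj[OF \<iota>h] by simp_all
  show "q \<in> Arr C" "\<kappa>M \<in> Arr C" "Cod C \<kappa>M = Dom C q" using qh \<kappa>Mh by (simp_all add: hom_def)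
  have "\<iota> \<cdot> (q \<cdot> \<kappa>M) = \<iota> \<cdot> zero_arr N' L"
    using precomp_eq[OF \<iota>q qh \<iota>h \<kappa>Mh'] assoc_hom[OF \<kappa>Mh' \<mu>1h p'h] \<kappa>M1 kp p'h \<iota>h O
    by (simp add: hom_def N'_def)
  then show "q \<cdot> \<kappa>M = zero_arr (Dom C \<kappa>M) (Cod C q)"
    using monicD[OF \<iota>m] comp_hom[OF \<kappa>Mh' qh] zero_arr_hom[OF O(1,2)] \<iota>h qh \<kappa>Mh' by (simp add: hom_def)
  show "monic \<kappa>M" using monic_comp_cancel[OF _ \<kappa>Mh' \<mu>1h] \<kappa>M1 kernel_monic[OF k'] by simp
  fix Z z assume z0: "z \<in> hom C Z (Dom C q)" and qz: "q \<cdot> z = zero_arr Z (Cod C q)"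
  have z: "z \<in> hom C Z M" using z0 qh by (simp add: hom_def)
  have ZO: "Z \<in> Obj C" using hom_obj[OF z] by simp
  have "p' \<cdot> (\<mu>1 \<cdot> z) = zero_arr Z (Cod C p')"
    using precomp_eq[OF \<iota>q qh \<iota>h z, symmetric] assoc_hom[OF z \<mu>1h p'h] qz qh \<iota>h p'h ZO
    by (simp add: hom_def)
  then obtain w where wh: "w \<in> hom C Z N'" and \<kappa>'w: "\<kappa>' \<cdot> w = \<mu>1 \<cdot> z"
    using kernel_lift[OF k', of "\<mu>1 \<cdot> z" Z] comp_hom[OF z \<mu>1h] p'h by (auto simp: hom_def N'_def)
  have \<mu>1w: "\<mu>1 \<cdot> (\<kappa>M \<cdot> w) = \<mu>1 \<cdot> z" using precomp_eq[OF \<kappa>M1 \<kappa>Mh' \<mu>1h wh] \<kappa>'w by simp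
  have "\<kappa> \<cdot> (\<mu> \<cdot> (\<kappa>M \<cdot> w)) = \<kappa> \<cdot> (\<mu> \<cdot> z)"
    using precomp_square[OF pm(9) \<mu>1h \<alpha>h \<mu>h \<kappa>h] comp_hom[OF wh \<kappa>Mh'] z \<mu>1w by metis
  then have "\<mu> \<cdot> (\<kappa>M \<cdot> w) = \<mu> \<cdot> z"
    using monicD[OF \<kappa>m] comp_hom[OF comp_hom[OF wh \<kappa>Mh'] \<mu>h] comp_hom[OF z \<mu>h] \<kappa>h by (simp add: hom_def)
  then have "\<kappa>M \<cdot> w = z"
    using pullback_uniq[OF pb _ _ \<mu>1w] comp_hom[OF wh \<kappa>Mh'] z \<mu>1h by (simp add: hom_def)
  then show "\<exists>u. u \<in> hom C Z (Dom C \<kappa>M) \<and> \<kappa>M \<cdot> u = z" using wh \<kappa>Mh' by (auto simp: hom_def)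
qed

lemma split_epi_on_pullback:
  assumes pb: "is_pullback C \<alpha> \<kappa> \<mu>1 \<mu>" and \<alpha>h: "\<alpha> \<in> hom C X' X" and \<kappa>h: "\<kappa> \<in> hom C N X"
    and \<mu>1h: "\<mu>1 \<in> hom C M X'" and \<mu>h: "\<mu> \<in> hom C M N" and p\<kappa>: "p \<cdot> \<kappa> = zero_arr N Y"
    and p'h: "p' \<in> hom C X' Y'" and s'h: "s' \<in> hom C Y' X'" and p's': "p' \<cdot> s' = Idm C Y'"
    and ph: "p \<in> hom C X Y" and sh: "s \<in> hom C Y X" and \<beta>h: "\<beta> \<in> hom C Y' Y"
    and p\<alpha>: "p \<cdot> \<alpha> = \<beta> \<cdot> p'" and \<alpha>s': "\<alpha> \<cdot> s' = s \<cdot> \<beta>"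
    and ki: "is_kernel C \<beta> \<iota>" and \<iota>h: "\<iota> \<in> hom C L Y'"
  obtains q sL where "q \<in> hom C M L" "\<iota> \<cdot> q = p' \<cdot> \<mu>1" "sL \<in> hom C L M" "q \<cdot> sL = Idm C L"
    "\<mu> \<cdot> sL = zero_arr L N"
proof -
  note pm = pullbackD[OF pb]
  have O: "L \<in> Obj C" "Y \<in> Obj C" "N \<in> Obj C" using hom_obj[OF \<iota>h] hom_obj[OF ph] hom_obj[OF \<kappa>h] by simp_all
  have "\<beta> \<cdot> (p' \<cdot> \<mu>1) = p \<cdot> (\<alpha> \<cdot> \<mu>1)" using precomp_square[OF p\<alpha>[symmetric] p'h \<beta>h \<alpha>h ph \<mu>1h] .
  also have "\<dots> = zero_arr M Y"
    using pm(9) precomp_eq[OF p\<kappa> \<kappa>h ph \<mu>h] O \<mu>h by (simp add: hom_def)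
  finally obtain q where qh: "q \<in> hom C M L" and \<iota>q: "\<iota> \<cdot> q = p' \<cdot> \<mu>1"
    using kernel_lift[OF ki, of "p' \<cdot> \<mu>1" M] comp_hom[OF \<mu>1h p'h] \<beta>h \<iota>h by (auto simp: hom_def)
  have "\<alpha> \<cdot> (s' \<cdot> \<iota>) = \<kappa> \<cdot> zero_arr L N"
    using precomp_square[OF \<alpha>s' s'h \<alpha>h \<beta>h sh \<iota>h] kernelD(4)[OF ki] \<beta>h \<iota>h sh \<kappa>h O
    by (simp add: hom_def)
  then obtain sL where sLh: "sL \<in> hom C L M" and sL1: "\<mu>1 \<cdot> sL = s' \<cdot> \<iota>" and \<mu>sL: "\<mu> \<cdot> sL = zero_arr L N"
    using pullback_lift[OF pb, of "s' \<cdot> \<iota>" L "zero_arr L N"] comp_hom[OF \<iota>h s'h] zero_arr_hom[OF O(1,3)]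
      \<alpha>h \<kappa>h \<mu>1h by (auto simp: hom_def)
  have "\<iota> \<cdot> (q \<cdot> sL) = \<iota> \<cdot> Idm C L"
    using precomp_eq[OF \<iota>q qh \<iota>h sLh] assoc_hom[OF sLh \<mu>1h p'h] sL1 precomp_eq[OF p's' s'h p'h \<iota>h]
      idl_hom[OF \<iota>h] idr_hom[OF \<iota>h] by simp
  then have "q \<cdot> sL = Idm C L"
    using monicD[OF kernel_monic[OF ki]] comp_hom[OF sLh qh] id_hom[OF O(1)] \<iota>h by (simp add: hom_def)
  then show ?thesis using that qh \<iota>q sLh \<mu>sL by blast
qed

text \<open>For a morphism (\<alpha>, \<beta>) of split epimorphisms with \<alpha> regular epic, pull \<alpha> back along the
  kernel \<kappa> of p. The result M is again split over the kernel L of \<beta>, with kernel that of p',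
  and the projection M \<rightarrow> N kills the section, so regular_epi_restrict_kernel applies.\<close>
lemma kernel_map_regular_epi:
  assumes \<alpha>R: "regular_epi C \<alpha>" and \<alpha>h: "\<alpha> \<in> hom C X' X" and \<beta>h: "\<beta> \<in> hom C Y' Y"
    and p'h: "p' \<in> hom C X' Y'" and s'h: "s' \<in> hom C Y' X'" and p's': "p' \<cdot> s' = Idm C Y'"
    and ph: "p \<in> hom C X Y" and sh: "s \<in> hom C Y X"
    and p\<alpha>: "p \<cdot> \<alpha> = \<beta> \<cdot> p'" and \<alpha>s': "\<alpha> \<cdot> s' = s \<cdot> \<beta>"
    and k': "is_kernel C p' \<kappa>'" and k: "is_kernel C p \<kappa>"
    and \<nu>h: "\<nu> \<in> hom C (Dom C \<kappa>') (Dom C \<kappa>)" and \<kappa>\<nu>: "\<kappa> \<cdot> \<nu> = \<alpha> \<cdot> \<kappa>'"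
  shows "regular_epi C \<nu>"
proof -
  define N' N where "N' = Dom C \<kappa>'" and "N = Dom C \<kappa>"
  have \<kappa>'h: "\<kappa>' \<in> hom C N' X'" and \<kappa>h: "\<kappa> \<in> hom C N X"
    using kernelD[OF k'] kernelD[OF k] p'h ph by (simp_all add: hom_def N'_def N_def)
  have p\<kappa>: "p \<cdot> \<kappa> = zero_arr N Y" using kernelD(4)[OF k] ph by (simp add: hom_def N_def)
  obtain \<iota> where ki: "is_kernel C \<beta> \<iota>" using kernel_exists \<beta>h by (auto simp: hom_def)
  have \<iota>h: "\<iota> \<in> hom C (Dom C \<iota>) Y'" using kernelD[OF ki] \<beta>h by (simp add: hom_def)
  have "\<alpha> \<in> Arr C" "\<kappa> \<in> Arr C" "Cod C \<alpha> = Cod C \<kappa>" using \<alpha>h \<kappa>h by (simp_all add: hom_def)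
  then obtain \<mu>1 \<mu> where pbM: "is_pullback C \<alpha> \<kappa> \<mu>1 \<mu>" by (rule pullback_exists)
  have \<mu>1h: "\<mu>1 \<in> hom C (Dom C \<mu>1) X'" and \<mu>h: "\<mu> \<in> hom C (Dom C \<mu>1) N"
    using pullbackD[OF pbM] \<alpha>h \<kappa>h by (simp_all add: hom_def)
  obtain q sL where qh: "q \<in> hom C (Dom C \<mu>1) (Dom C \<iota>)" and \<iota>q: "\<iota> \<cdot> q = p' \<cdot> \<mu>1"
    and sLh: "sL \<in> hom C (Dom C \<iota>) (Dom C \<mu>1)" and qsL: "q \<cdot> sL = Idm C (Dom C \<iota>)"
    and \<mu>sL: "\<mu> \<cdot> sL = zero_arr (Dom C \<iota>) N"
    by (rule split_epi_on_pullback[OF pbM \<alpha>h \<kappa>h \<mu>1h \<mu>h p\<kappa> p'h s'h p's' ph sh \<beta>h p\<alpha> \<alpha>s' ki \<iota>h])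
  obtain \<kappa>M where \<kappa>Mh: "\<kappa>M \<in> hom C N' (Dom C \<mu>1)" and \<kappa>M1: "\<mu>1 \<cdot> \<kappa>M = \<kappa>'" and \<mu>\<kappa>M: "\<mu> \<cdot> \<kappa>M = \<nu>"
    using pullback_lift[OF pbM, of \<kappa>' N' \<nu>] \<kappa>'h \<nu>h \<kappa>\<nu> \<alpha>h \<kappa>h by (auto simp: hom_def N'_def N_def)
  have "is_kernel C q \<kappa>M"
    using kernel_pullback_projection[OF pbM \<alpha>h \<kappa>h \<mu>1h \<mu>h kernel_monic[OF k] qh \<iota>h kernel_monic[OF ki] \<iota>q p'h k']
      \<kappa>Mh \<kappa>M1 by (simp add: N'_def)
  then have "regular_epi C (\<mu> \<cdot> \<kappa>M)"
    using regular_epi_restrict_kernel[OF qh sLh qsL _ regular_epi_pullback[OF pbM \<alpha>R] \<mu>h \<mu>sL] by blast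
  then show ?thesis using \<mu>\<kappa>M by simp
qed
section \<open>Coproducts\<close>

lemma coproductD:
  assumes "is_coproduct C i1 i2" shows "i1 \<in> Arr C" "i2 \<in> Arr C" "Cod C i1 = Cod C i2"
  using assms by (simp_all add: is_coproduct_def)

lemma coproduct_ex1:
  assumes c: "is_coproduct C i1 i2" and g1: "g1 \<in> hom C (Dom C i1) Z" and g2: "g2 \<in> hom C (Dom C i2) Z"
  shows "\<exists>!u. u \<in> hom C (Cod C i1) Z \<and> u \<cdot> i1 = g1 \<and> u \<cdot> i2 = g2"
proof -
  have "\<forall>g1\<in>Arr C. \<forall>g2\<in>Arr C. Dom C g1 = Dom C i1 \<longrightarrow> Dom C g2 = Dom C i2 \<longrightarrow> Cod C g1 = Cod C g2 \<longrightarrow>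
        (\<exists>!u. u \<in> hom C (Cod C i1) (Cod C g1) \<and> u \<cdot> i1 = g1 \<and> u \<cdot> i2 = g2)"
    using c unfolding is_coproduct_def by (elim conjE)
  moreover have "g1 \<in> Arr C" "g2 \<in> Arr C" "Dom C g1 = Dom C i1" "Dom C g2 = Dom C i2" "Cod C g1 = Cod C g2"
    and Z: "Cod C g1 = Z" using g1 g2 by (simp_all add: hom_def)
  ultimately show ?thesis unfolding Z[symmetric] by blast
qed

lemma coproduct_eqI:
  assumes c: "is_coproduct C i1 i2" and x: "x \<in> hom C (Cod C i1) Z" and y: "y \<in> hom C (Cod C i1) Z"
    and "x \<cdot> i1 = y \<cdot> i1" and "x \<cdot> i2 = y \<cdot> i2"
  shows "x = y"
proof -
  have "y \<cdot> i1 \<in> hom C (Dom C i1) Z" "y \<cdot> i2 \<in> hom C (Dom C i2) Z"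
    using coproductD[OF c] y by (simp_all add: hom_def)
  from coproduct_ex1[OF c this] show ?thesis using assms x y by blast
qed

lemma coproduct3D:
  assumes "is_coproduct3 C j1 j2 j3"
  shows "j1 \<in> Arr C" "j2 \<in> Arr C" "j3 \<in> Arr C" "Cod C j1 = Cod C j2" "Cod C j2 = Cod C j3"
  using assms by (simp_all add: is_coproduct3_def)

lemma coproduct3_ex1:
  assumes c: "is_coproduct3 C j1 j2 j3" and g1: "g1 \<in> hom C (Dom C j1) Z"
    and g2: "g2 \<in> hom C (Dom C j2) Z" and g3: "g3 \<in> hom C (Dom C j3) Z"
  shows "\<exists>!u. u \<in> hom C (Cod C j1) Z \<and> u \<cdot> j1 = g1 \<and> u \<cdot> j2 = g2 \<and> u \<cdot> j3 = g3"
proof -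
  have "\<forall>g1\<in>Arr C. \<forall>g2\<in>Arr C. \<forall>g3\<in>Arr C. Dom C g1 = Dom C j1 \<longrightarrow> Dom C g2 = Dom C j2 \<longrightarrow>
        Dom C g3 = Dom C j3 \<longrightarrow> Cod C g1 = Cod C g2 \<longrightarrow> Cod C g2 = Cod C g3 \<longrightarrow>
        (\<exists>!u. u \<in> hom C (Cod C j1) (Cod C g1) \<and> u \<cdot> j1 = g1 \<and> u \<cdot> j2 = g2 \<and> u \<cdot> j3 = g3)"
    using c unfolding is_coproduct3_def by (elim conjE)
  moreover have "g1 \<in> Arr C" "g2 \<in> Arr C" "g3 \<in> Arr C" "Dom C g1 = Dom C j1" "Dom C g2 = Dom C j2"
    "Dom C g3 = Dom C j3" "Cod C g1 = Cod C g2" "Cod C g2 = Cod C g3"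
    and Z: "Cod C g1 = Z" using g1 g2 g3 by (simp_all add: hom_def)
  ultimately show ?thesis unfolding Z[symmetric] by blast
qed

lemma coproduct3_copair:
  assumes "is_coproduct3 C j1 j2 j3" "g1 \<in> hom C (Dom C j1) Z" "g2 \<in> hom C (Dom C j2) Z"
    "g3 \<in> hom C (Dom C j3) Z"
  obtains u where "u \<in> hom C (Cod C j1) Z" "u \<cdot> j1 = g1" "u \<cdot> j2 = g2" "u \<cdot> j3 = g3"
  using coproduct3_ex1[OF assms] by blast

lemma coproduct3_eqI:
  assumes c: "is_coproduct3 C j1 j2 j3" and x: "x \<in> hom C (Cod C j1) Z" and y: "y \<in> hom C (Cod C j1) Z"
    and "x \<cdot> j1 = y \<cdot> j1" and "x \<cdot> j2 = y \<cdot> j2" and "x \<cdot> j3 = y \<cdot> j3"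
  shows "x = y"
proof -
  have "y \<cdot> j1 \<in> hom C (Dom C j1) Z" "y \<cdot> j2 \<in> hom C (Dom C j2) Z" "y \<cdot> j3 \<in> hom C (Dom C j3) Z"
    using coproduct3D[OF c] y by (simp_all add: hom_def)
  from coproduct3_ex1[OF c this] show ?thesis using assms x y by blast
qed

lemma strong_epi_diagonal_along:
  assumes rs: "strong_epi r" and rh: "r \<in> hom C A' A" and i'h: "i' \<in> hom C A' P'" and ih: "i \<in> hom C A P"
    and \<sigma>h: "\<sigma> \<in> hom C P' P" and \<sigma>i': "\<sigma> \<cdot> i' = i \<cdot> r"
    and n: "monic n" and nh: "n \<in> hom C D E" and uh: "u \<in> hom C P' D" and vh: "v \<in> hom C P E"
    and vu: "v \<cdot> \<sigma> = n \<cdot> u"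
  obtains d where "d \<in> hom C A D" "n \<cdot> d = v \<cdot> i" "d \<cdot> r = u \<cdot> i'"
proof -
  have "(v \<cdot> i) \<cdot> r = n \<cdot> (u \<cdot> i')"
    using assoc_hom[OF rh ih vh] \<sigma>i' precomp_square[OF vu \<sigma>h vh uh nh i'h] by simp
  moreover have "u \<cdot> i' \<in> hom C (Dom C r) (Dom C n)" "v \<cdot> i \<in> hom C (Cod C r) (Cod C n)"
    using comp_hom[OF i'h uh] comp_hom[OF ih vh] rh nh by (simp_all add: hom_def)
  ultimately obtain d where "d \<in> hom C (Cod C r) (Dom C n)" "n \<cdot> d = v \<cdot> i" "d \<cdot> r = u \<cdot> i'"
    using strong_epiD[OF rs n] by metis
  then show ?thesis using that rh nh by (simp add: hom_def)
qed

lemma coproduct3_map_strong_epi: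
  assumes c': "is_coproduct3 C j1' j2' j3'" and c: "is_coproduct3 C j1 j2 j3"
    and j1'h: "j1' \<in> hom C W' P'" and j2'h: "j2' \<in> hom C X' P'" and j3'h: "j3' \<in> hom C Y' P'"
    and j1h: "j1 \<in> hom C W P" and j2h: "j2 \<in> hom C X P" and j3h: "j3 \<in> hom C Y P"
    and hh: "h \<in> hom C W' W" and fh: "f \<in> hom C X' X" and gh: "g \<in> hom C Y' Y"
    and hs: "strong_epi h" and fs: "strong_epi f" and gs: "strong_epi g"
    and \<sigma>h: "\<sigma> \<in> hom C P' P" and \<sigma>1: "\<sigma> \<cdot> j1' = j1 \<cdot> h" and \<sigma>2: "\<sigma> \<cdot> j2' = j2 \<cdot> f" and \<sigma>3: "\<sigma> \<cdot> j3' = j3 \<cdot> g"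
  shows "strong_epi \<sigma>"
proof (rule strong_epiI)
  show "\<sigma> \<in> Arr C" using \<sigma>h by (simp add: hom_def)
  fix n u v assume n: "monic n" and u: "u \<in> hom C (Dom C \<sigma>) (Dom C n)" and v: "v \<in> hom C (Cod C \<sigma>) (Cod C n)"
    and vu: "v \<cdot> \<sigma> = n \<cdot> u"
  define D E where "D = Dom C n" and "E = Cod C n"
  have nh: "n \<in> hom C D E" using monic_arr[OF n] by (simp add: hom_def D_def E_def)
  have uh: "u \<in> hom C P' D" and vh: "v \<in> hom C P E" using u v \<sigma>h by (simp_all add: hom_def D_def E_def)
  note diag = strong_epi_diagonal_along[OF _ _ _ _ \<sigma>h _ n nh uh vh vu]
  obtain d1 where d1h: "d1 \<in> hom C W D" and nd1: "n \<cdot> d1 = v \<cdot> j1" and d1h': "d1 \<cdot> h = u \<cdot> j1'"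
    using diag[OF hs hh j1'h j1h \<sigma>1] .
  obtain d2 where d2h: "d2 \<in> hom C X D" and nd2: "n \<cdot> d2 = v \<cdot> j2" and d2f: "d2 \<cdot> f = u \<cdot> j2'"
    using diag[OF fs fh j2'h j2h \<sigma>2] .
  obtain d3 where d3h: "d3 \<in> hom C Y D" and nd3: "n \<cdot> d3 = v \<cdot> j3" and d3g: "d3 \<cdot> g = u \<cdot> j3'"
    using diag[OF gs gh j3'h j3h \<sigma>3] .
  have CP': "Cod C j1' = P'" and CP: "Cod C j1 = P" using j1'h j1h by (simp_all add: hom_def)
  obtain d where dh0: "d \<in> hom C (Cod C j1) D" and dj1: "d \<cdot> j1 = d1" and dj2: "d \<cdot> j2 = d2" and dj3: "d \<cdot> j3 = d3"
    using coproduct3_copair[OF c, of d1 D d2 d3] d1h d2h d3h j1h j2h j3h by (auto simp: hom_def)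
  have dh: "d \<in> hom C P D" using dh0 CP by simp
  have "n \<cdot> d = v"
    using coproduct3_eqI[OF c, of "n \<cdot> d" E v] comp_hom[OF dh nh] vh CP
      assoc_hom[OF j1h dh nh] assoc_hom[OF j2h dh nh] assoc_hom[OF j3h dh nh] dj1 dj2 dj3 nd1 nd2 nd3
    by simp
  moreover have "d \<cdot> \<sigma> = u"
    using coproduct3_eqI[OF c', of "d \<cdot> \<sigma>" D u] comp_hom[OF \<sigma>h dh] uh CP'
      assoc_hom[OF j1'h \<sigma>h dh] assoc_hom[OF j2'h \<sigma>h dh] assoc_hom[OF j3'h \<sigma>h dh] \<sigma>1 \<sigma>2 \<sigma>3
      precomp_eq[OF dj1 j1h dh hh] precomp_eq[OF dj2 j2h dh fh] precomp_eq[OF dj3 j3h dh gh] d1h' d2f d3g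
    by simp
  ultimately show "\<exists>d. d \<in> hom C (Cod C \<sigma>) (Dom C n) \<and> n \<cdot> d = v \<and> d \<cdot> \<sigma> = u"
    using dh \<sigma>h by (auto simp: hom_def D_def)
qed

end

text \<open>The data of the definition of X \<otimes>^W Y, with named objects: P = W + X + Y with injections
  j1, j2, j3; WX = W + X and WY = W + Y with injections a1, a2 and b1, b2; e1 = [1, 0] and
  e2 = [1, 0]; Q = WX \<times>_W WY with projections p1, p2; m = <[i1, i2, 0], [i1, 0, i2]>; and
  k the kernel of m.\<close>
locale tensor_presentation = semi_abelian_category C for C :: "('o,'m) cat" +
  fixes W X Y P WX WY Q :: 'o and j1 j2 j3 a1 a2 b1 b2 e1 e2 p1 p2 m k :: 'm
  assumes coproduct_j: "is_coproduct3 C j1 j2 j3"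
    and j1: "j1 \<in> hom C W P" and j2: "j2 \<in> hom C X P" and j3: "j3 \<in> hom C Y P"
    and coproduct_a: "is_coproduct C a1 a2" and a1: "a1 \<in> hom C W WX" and a2: "a2 \<in> hom C X WX"
    and coproduct_b: "is_coproduct C b1 b2" and b1: "b1 \<in> hom C W WY" and b2: "b2 \<in> hom C Y WY"
    and e1: "e1 \<in> hom C WX W" and e1_a1: "e1 \<cdot> a1 = Idm C W" and e1_a2: "e1 \<cdot> a2 = zero_arr X W"
    and e2: "e2 \<in> hom C WY W" and e2_b1: "e2 \<cdot> b1 = Idm C W" and e2_b2: "e2 \<cdot> b2 = zero_arr Y W"
    and pullback: "is_pullback C e1 e2 p1 p2" and p1: "p1 \<in> hom C Q WX" and p2: "p2 \<in> hom C Q WY"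
    and m: "m \<in> hom C P Q"
    and m_j1: "p1 \<cdot> (m \<cdot> j1) = a1" "p2 \<cdot> (m \<cdot> j1) = b1"
    and m_j2: "p1 \<cdot> (m \<cdot> j2) = a2" "p2 \<cdot> (m \<cdot> j2) = zero_arr X WY"
    and m_j3: "p1 \<cdot> (m \<cdot> j3) = zero_arr Y WX" "p2 \<cdot> (m \<cdot> j3) = b2"
    and kernel: "is_kernel C m k"
begin

lemma objects: "W \<in> Obj C" "X \<in> Obj C" "Y \<in> Obj C" "P \<in> Obj C" "WX \<in> Obj C" "WY \<in> Obj C" "Q \<in> Obj C"
  using hom_obj[OF j1] hom_obj[OF j2] hom_obj[OF j3] hom_obj[OF a1] hom_obj[OF b1] hom_obj[OF m] by simp_all

definition pX :: 'm where "pX = p1 \<cdot> m"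
definition pY :: 'm where "pY = p2 \<cdot> m"

lemma pX: "pX \<in> hom C P WX" "pX \<cdot> j1 = a1" "pX \<cdot> j2 = a2" "pX \<cdot> j3 = zero_arr Y WX"
  and pY: "pY \<in> hom C P WY" "pY \<cdot> j1 = b1" "pY \<cdot> j2 = zero_arr X WY" "pY \<cdot> j3 = b2"
  unfolding pX_def pY_def
  using comp_hom[OF m p1] comp_hom[OF m p2] m_j1 m_j2 m_j3
    assoc_hom[OF j1 m p1] assoc_hom[OF j2 m p1] assoc_hom[OF j3 m p1]
    assoc_hom[OF j1 m p2] assoc_hom[OF j2 m p2] assoc_hom[OF j3 m p2] by simp_all

lemma e2_pY: "e2 \<cdot> pY = e1 \<cdot> pX"
  unfolding pX_def pY_def using precomp_square[OF pullbackD(9)[OF pullback, symmetric] p2 e2 p1 e1 m] .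

definition sX :: 'm where "sX = (THE u. u \<in> hom C WX P \<and> u \<cdot> a1 = j1 \<and> u \<cdot> a2 = j2)"
definition cY :: 'm where "cY = (THE u. u \<in> hom C WY P \<and> u \<cdot> b1 = j1 \<and> u \<cdot> b2 = j3)"

lemma sX: "sX \<in> hom C WX P" "sX \<cdot> a1 = j1" "sX \<cdot> a2 = j2"
proof -
  have "\<exists>!u. u \<in> hom C (Cod C a1) P \<and> u \<cdot> a1 = j1 \<and> u \<cdot> a2 = j2"
    by (rule coproduct_ex1[OF coproduct_a]) (use j1 j2 a1 a2 in \<open>simp_all add: hom_def\<close>)
  from theI'[OF this] show "sX \<in> hom C WX P" "sX \<cdot> a1 = j1" "sX \<cdot> a2 = j2"
    using a1 by (simp_all add: sX_def hom_def)
qed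

lemma cY: "cY \<in> hom C WY P" "cY \<cdot> b1 = j1" "cY \<cdot> b2 = j3"
proof -
  have "\<exists>!u. u \<in> hom C (Cod C b1) P \<and> u \<cdot> b1 = j1 \<and> u \<cdot> b2 = j3"
    by (rule coproduct_ex1[OF coproduct_b]) (use j1 j3 b1 b2 in \<open>simp_all add: hom_def\<close>)
  from theI'[OF this] show "cY \<in> hom C WY P" "cY \<cdot> b1 = j1" "cY \<cdot> b2 = j3"
    using b1 by (simp_all add: cY_def hom_def)
qed

lemma pX_sX: "pX \<cdot> sX = Idm C WX"
proof (rule coproduct_eqI[OF coproduct_a])
  show "pX \<cdot> sX \<in> hom C (Cod C a1) WX" "Idm C WX \<in> hom C (Cod C a1) WX"
    using comp_hom[OF sX(1) pX(1)] id_hom objects(5) a1 by (simp_all add: hom_def)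
  show "(pX \<cdot> sX) \<cdot> a1 = Idm C WX \<cdot> a1" "(pX \<cdot> sX) \<cdot> a2 = Idm C WX \<cdot> a2"
    using assoc_hom[OF a1 sX(1) pX(1)] assoc_hom[OF a2 sX(1) pX(1)] sX pX idl_hom[OF a1] idl_hom[OF a2]
    by simp_all
qed

lemma pY_cY: "pY \<cdot> cY = Idm C WY"
proof (rule coproduct_eqI[OF coproduct_b])
  show "pY \<cdot> cY \<in> hom C (Cod C b1) WY" "Idm C WY \<in> hom C (Cod C b1) WY"
    using comp_hom[OF cY(1) pY(1)] id_hom objects(6) b1 by (simp_all add: hom_def)
  show "(pY \<cdot> cY) \<cdot> b1 = Idm C WY \<cdot> b1" "(pY \<cdot> cY) \<cdot> b2 = Idm C WY \<cdot> b2"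
    using assoc_hom[OF b1 cY(1) pY(1)] assoc_hom[OF b2 cY(1) pY(1)] cY pY idl_hom[OF b1] idl_hom[OF b2]
    by simp_all
qed

lemma pX_cY: "pX \<cdot> cY = a1 \<cdot> e2"
proof (rule coproduct_eqI[OF coproduct_b])
  show "pX \<cdot> cY \<in> hom C (Cod C b1) WX" "a1 \<cdot> e2 \<in> hom C (Cod C b1) WX"
    using comp_hom[OF cY(1) pX(1)] comp_hom[OF e2 a1] b1 by (simp_all add: hom_def)
  show "(pX \<cdot> cY) \<cdot> b1 = (a1 \<cdot> e2) \<cdot> b1"
    using assoc_hom[OF b1 cY(1) pX(1)] assoc_hom[OF b1 e2 a1] cY pX e2_b1 idr_hom[OF a1] by simp
  show "(pX \<cdot> cY) \<cdot> b2 = (a1 \<cdot> e2) \<cdot> b2"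
    using assoc_hom[OF b2 cY(1) pX(1)] assoc_hom[OF b2 e2 a1] cY pX e2_b2 a1 objects by (simp add: hom_def)
qed

definition \<kappa>X :: 'm where "\<kappa>X = (SOME \<kappa>. is_kernel C pX \<kappa>)"
definition \<kappa>Y :: 'm where "\<kappa>Y = (SOME \<kappa>. is_kernel C e2 \<kappa>)"
definition NX :: 'o where "NX = Dom C \<kappa>X"
definition NY :: 'o where "NY = Dom C \<kappa>Y"

lemma kernel_pX: "is_kernel C pX \<kappa>X" and kernel_e2: "is_kernel C e2 \<kappa>Y"
proof -
  obtain \<kappa> where "is_kernel C pX \<kappa>" using kernel_exists pX(1) by (auto simp: hom_def)
  then show "is_kernel C pX \<kappa>X" unfolding \<kappa>X_def by (rule someI)
  obtain \<kappa>' where "is_kernel C e2 \<kappa>'" using kernel_exists e2 by (auto simp: hom_def)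
  then show "is_kernel C e2 \<kappa>Y" unfolding \<kappa>Y_def by (rule someI)
qed

lemma \<kappa>X: "\<kappa>X \<in> hom C NX P" and \<kappa>Y: "\<kappa>Y \<in> hom C NY WY"
  using kernelD[OF kernel_pX] kernelD[OF kernel_e2] pX(1) e2 by (simp_all add: hom_def NX_def NY_def)

definition qY :: 'm where "qY = kernel_map \<kappa>Y pY \<kappa>X"
definition sY :: 'm where "sY = kernel_map \<kappa>X cY \<kappa>Y"
definition k0 :: 'm where "k0 = kernel_map \<kappa>X (Idm C P) k"

lemma qY: "qY \<in> hom C NX NY" "\<kappa>Y \<cdot> qY = pY \<cdot> \<kappa>X"
  using kernel_map[OF kernel_e2 kernel_pX e2 pX(1) pY(1) e1 e2_pY]
  by (simp_all add: qY_def NX_def NY_def)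

lemma sY: "sY \<in> hom C NY NX" "\<kappa>X \<cdot> sY = cY \<cdot> \<kappa>Y"
  using kernel_map[OF kernel_pX kernel_e2 pX(1) e2 cY(1) a1 pX_cY]
  by (simp_all add: sY_def NX_def NY_def)

lemma k0: "k0 \<in> hom C (Dom C k) NX" "\<kappa>X \<cdot> k0 = k"
  using kernel_map[OF kernel_pX kernel pX(1) m id_hom[OF objects(4)] p1] idr_hom[OF pX(1)]
    kernelD(2,3)[OF kernel] m
  by (simp_all add: k0_def NX_def pX_def hom_def)

lemma qY_sY: "qY \<cdot> sY = Idm C NY"
proof -
  have "\<kappa>Y \<cdot> (qY \<cdot> sY) = \<kappa>Y \<cdot> Idm C NY"
    using precomp_square[OF qY(2) qY(1) \<kappa>Y \<kappa>X pY(1) sY(1)] sY(2) assoc_hom[OF \<kappa>Y cY(1) pY(1)]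
      pY_cY idl_hom[OF \<kappa>Y] idr_hom[OF \<kappa>Y] by simp
  then show ?thesis
    using monicD[OF kernel_monic[OF kernel_e2]] comp_hom[OF sY(1) qY(1)] id_hom hom_obj[OF \<kappa>Y] \<kappa>Y
    by (simp add: hom_def)
qed

text \<open>An arrow into P with both projections zero is zero, as Q is a pullback; so the kernel of m
  is the kernel of the restriction of pY to the kernel of pX.\<close>
lemma kernel_qY: "is_kernel C qY k0"
proof (rule kernelI)
  define K where "K = Dom C k"
  have k0h: "k0 \<in> hom C K NX" and kh: "k \<in> hom C K P" using k0 kernelD[OF kernel] m by (simp_all add: hom_def K_def)
  have KO: "K \<in> Obj C" using hom_obj[OF kh] by simp
  show "qY \<in> Arr C" "k0 \<in> Arr C" "Cod C k0 = Dom C qY" using qY k0h by (simp_all add: hom_def)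
  show "monic k0" using monic_comp_cancel[OF _ k0h \<kappa>X] k0(2) kernel_monic[OF kernel] by simp
  have "pY \<cdot> k = zero_arr K WY"
    using assoc_hom[OF kh m p2] kernelD(4)[OF kernel] p2 m objects KO by (simp add: pY_def hom_def K_def)
  then have "\<kappa>Y \<cdot> (qY \<cdot> k0) = \<kappa>Y \<cdot> zero_arr K NY"
    using precomp_square[OF qY(2) qY(1) \<kappa>Y \<kappa>X pY(1) k0h] k0(2) \<kappa>Y KO by (simp add: hom_def)
  then show "qY \<cdot> k0 = zero_arr (Dom C k0) (Cod C qY)"
    using monicD[OF kernel_monic[OF kernel_e2]] comp_hom[OF k0h qY(1)] zero_arr_hom[OF KO] hom_obj[OF \<kappa>Y] \<kappa>Y qY k0h
    by (simp add: hom_def)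
  fix Z z assume z0: "z \<in> hom C Z (Dom C qY)" and qz: "qY \<cdot> z = zero_arr Z (Cod C qY)"
  have z: "z \<in> hom C Z NX" using z0 qY by (simp add: hom_def)
  have ZO: "Z \<in> Obj C" using hom_obj[OF z] by simp
  have \<kappa>Xz: "\<kappa>X \<cdot> z \<in> hom C Z P" using comp_hom[OF z \<kappa>X] .
  have "p2 \<cdot> (m \<cdot> (\<kappa>X \<cdot> z)) = p2 \<cdot> zero_arr Z Q"
    using precomp_square[OF qY(2)[symmetric] \<kappa>X pY(1) qY(1) \<kappa>Y z] qz qY \<kappa>Y assoc_hom[OF \<kappa>Xz m p2] p2 ZO
    by (simp add: hom_def pY_def)
  moreover have "p1 \<cdot> (m \<cdot> (\<kappa>X \<cdot> z)) = p1 \<cdot> zero_arr Z Q"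
    using precomp_eq[OF kernelD(4)[OF kernel_pX] \<kappa>X pX(1) z] assoc_hom[OF \<kappa>Xz m p1] p1 pX(1) \<kappa>X z ZO objects
    by (simp add: hom_def pX_def NX_def)
  ultimately have "m \<cdot> (\<kappa>X \<cdot> z) = zero_arr Z Q"
    using pullback_uniq[OF pullback, of "m \<cdot> (\<kappa>X \<cdot> z)" Z "zero_arr Z Q"] comp_hom[OF \<kappa>Xz m]
      zero_arr_hom[OF ZO objects(7)] p1 by (simp add: hom_def)
  moreover have "\<kappa>X \<cdot> z \<in> hom C Z (Dom C m)" using \<kappa>Xz m by (simp add: hom_def)
  ultimately obtain w where wh: "w \<in> hom C Z K" and kw: "k \<cdot> w = \<kappa>X \<cdot> z"
    using kernel_lift[OF kernel, of "\<kappa>X \<cdot> z" Z] m by (auto simp: hom_def K_def)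
  have "\<kappa>X \<cdot> (k0 \<cdot> w) = \<kappa>X \<cdot> z" using precomp_eq[OF k0(2) k0h \<kappa>X wh] kw by simp
  then have "k0 \<cdot> w = z" using monicD[OF kernel_monic[OF kernel_pX]] comp_hom[OF wh k0h] z by (simp add: NX_def)
  then show "\<exists>u. u \<in> hom C Z (Dom C k0) \<and> k0 \<cdot> u = z" using wh k0h by (auto simp: hom_def)
qed

end

lemma (in semi_abelian_category) tensor_presentationI:
  assumes t: "is_tensor C W X Y j1 j2 j3 k"
  shows "\<exists>P WX WY Q a1 a2 b1 b2 e1 e2 p1 p2 m.
    tensor_presentation C W X Y P WX WY Q j1 j2 j3 a1 a2 b1 b2 e1 e2 p1 p2 m k"
proof -
  obtain a1 a2 b1 b2 e1 e2 p1 p2 m where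
    c3: "is_coproduct3 C j1 j2 j3" and dj: "Dom C j1 = W" "Dom C j2 = X" "Dom C j3 = Y"
    and ca: "is_coproduct C a1 a2" and da: "Dom C a1 = W" "Dom C a2 = X"
    and cb: "is_coproduct C b1 b2" and db: "Dom C b1 = W" "Dom C b2 = Y"
    and e1h: "e1 \<in> hom C (Cod C a1) W" and "e1 \<cdot> a1 = Idm C W" and e1a2: "is_zero C (e1 \<cdot> a2)"
    and e2h: "e2 \<in> hom C (Cod C b1) W" and "e2 \<cdot> b1 = Idm C W" and e2b2: "is_zero C (e2 \<cdot> b2)"
    and pb: "is_pullback C e1 e2 p1 p2" and mh: "m \<in> hom C (Cod C j1) (Dom C p1)"
    and m1: "(p1 \<cdot> m) \<cdot> j1 = a1" and m2: "(p1 \<cdot> m) \<cdot> j2 = a2" and m3: "is_zero C ((p1 \<cdot> m) \<cdot> j3)"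
    and n1: "(p2 \<cdot> m) \<cdot> j1 = b1" and n2: "is_zero C ((p2 \<cdot> m) \<cdot> j2)" and n3: "(p2 \<cdot> m) \<cdot> j3 = b2"
    and "is_kernel C m k"
    using t unfolding is_tensor_def by blast
  note j = coproduct3D[OF c3] and a = coproductD[OF ca] and b = coproductD[OF cb] and pa = pullbackD[OF pb]
  define P WX WY Q where "P = Cod C j1" and "WX = Cod C a1" and "WY = Cod C b1" and "Q = Dom C p1"
  have j1h: "j1 \<in> hom C W P" and j2h: "j2 \<in> hom C X P" and j3h: "j3 \<in> hom C Y P"
    using j dj by (simp_all add: hom_def P_def)
  have "a1 \<in> hom C W WX" and a2h: "a2 \<in> hom C X WX" using a da by (simp_all add: hom_def WX_def)
  have "b1 \<in> hom C W WY" and b2h: "b2 \<in> hom C Y WY" using b db by (simp_all add: hom_def WY_def)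
  have e1h': "e1 \<in> hom C WX W" and e2h': "e2 \<in> hom C WY W" using e1h e2h by (simp_all add: WX_def WY_def)
  have p1h: "p1 \<in> hom C Q WX" and p2h: "p2 \<in> hom C Q WY" using pa e1h' e2h' by (simp_all add: hom_def Q_def)
  have mh': "m \<in> hom C P Q" using mh by (simp add: P_def Q_def)
  have zero: "f = zero_arr A B" if "is_zero C f" "f \<in> hom C A B" for f A B
    using that is_zeroD by (simp add: hom_def)
  show ?thesis
  proof (intro exI)
    show "tensor_presentation C W X Y P WX WY Q j1 j2 j3 a1 a2 b1 b2 e1 e2 p1 p2 m k"
    proof (unfold_locales)
      show "e1 \<cdot> a2 = zero_arr X W" using zero[OF e1a2 comp_hom[OF a2h e1h']] .
      show "e2 \<cdot> b2 = zero_arr Y W" using zero[OF e2b2 comp_hom[OF b2h e2h']] .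
      show "p1 \<cdot> (m \<cdot> j3) = zero_arr Y WX"
        using zero[OF m3 comp_hom[OF j3h comp_hom[OF mh' p1h]]] assoc_hom[OF j3h mh' p1h] by simp
      show "p2 \<cdot> (m \<cdot> j2) = zero_arr X WY"
        using zero[OF n2 comp_hom[OF j2h comp_hom[OF mh' p2h]]] assoc_hom[OF j2h mh' p2h] by simp
      show "p1 \<cdot> (m \<cdot> j1) = a1" "p1 \<cdot> (m \<cdot> j2) = a2" "p2 \<cdot> (m \<cdot> j1) = b1" "p2 \<cdot> (m \<cdot> j3) = b2"
        using m1 m2 n1 n3 assoc_hom[OF j1h mh' p1h] assoc_hom[OF j2h mh' p1h]
          assoc_hom[OF j1h mh' p2h] assoc_hom[OF j3h mh' p2h] by simp_all
    qed fact+
  qed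
qed

locale tensor_map = semi_abelian_category C +
  src: tensor_presentation C W' X' Y' P' WX' WY' Q' j1' j2' j3' a1' a2' b1' b2' e1' e2' p1' p2' m' k' +
  tgt: tensor_presentation C W X Y P WX WY Q j1 j2 j3 a1 a2 b1 b2 e1 e2 p1 p2 m k
  for C :: "('o,'m) cat"
    and W' X' Y' P' WX' WY' Q' W X Y P WX WY Q :: 'o
    and j1' j2' j3' a1' a2' b1' b2' e1' e2' p1' p2' m' k' j1 j2 j3 a1 a2 b1 b2 e1 e2 p1 p2 m k :: 'm +
  fixes h f g \<sigma> :: 'm
  assumes h: "h \<in> hom C W' W" and f: "f \<in> hom C X' X" and g: "g \<in> hom C Y' Y"
    and \<sigma>: "\<sigma> \<in> hom C P' P"
    and \<sigma>_j1: "\<sigma> \<cdot> j1' = j1 \<cdot> h" and \<sigma>_j2: "\<sigma> \<cdot> j2' = j2 \<cdot> f" and \<sigma>_j3: "\<sigma> \<cdot> j3' = j3 \<cdot> g"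
begin

definition \<tau>X :: 'm where "\<tau>X = (THE u. u \<in> hom C WX' WX \<and> u \<cdot> a1' = a1 \<cdot> h \<and> u \<cdot> a2' = a2 \<cdot> f)"
definition \<tau>Y :: 'm where "\<tau>Y = (THE u. u \<in> hom C WY' WY \<and> u \<cdot> b1' = b1 \<cdot> h \<and> u \<cdot> b2' = b2 \<cdot> g)"

lemma \<tau>X: "\<tau>X \<in> hom C WX' WX" "\<tau>X \<cdot> a1' = a1 \<cdot> h" "\<tau>X \<cdot> a2' = a2 \<cdot> f"
proof -
  have "\<exists>!u. u \<in> hom C (Cod C a1') WX \<and> u \<cdot> a1' = a1 \<cdot> h \<and> u \<cdot> a2' = a2 \<cdot> f"
    by (rule coproduct_ex1[OF src.coproduct_a])
      (use comp_hom[OF h tgt.a1] comp_hom[OF f tgt.a2] src.a1 src.a2 in \<open>simp_all add: hom_def\<close>)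
  from theI'[OF this] show "\<tau>X \<in> hom C WX' WX" "\<tau>X \<cdot> a1' = a1 \<cdot> h" "\<tau>X \<cdot> a2' = a2 \<cdot> f"
    using src.a1 by (simp_all add: \<tau>X_def hom_def)
qed

lemma \<tau>Y: "\<tau>Y \<in> hom C WY' WY" "\<tau>Y \<cdot> b1' = b1 \<cdot> h" "\<tau>Y \<cdot> b2' = b2 \<cdot> g"
proof -
  have "\<exists>!u. u \<in> hom C (Cod C b1') WY \<and> u \<cdot> b1' = b1 \<cdot> h \<and> u \<cdot> b2' = b2 \<cdot> g"
    by (rule coproduct_ex1[OF src.coproduct_b])
      (use comp_hom[OF h tgt.b1] comp_hom[OF g tgt.b2] src.b1 src.b2 in \<open>simp_all add: hom_def\<close>)
  from theI'[OF this] show "\<tau>Y \<in> hom C WY' WY" "\<tau>Y \<cdot> b1' = b1 \<cdot> h" "\<tau>Y \<cdot> b2' = b2 \<cdot> g"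
    using src.b1 by (simp_all add: \<tau>Y_def hom_def)
qed

lemma pX_\<sigma>: "tgt.pX \<cdot> \<sigma> = \<tau>X \<cdot> src.pX"
proof (rule coproduct3_eqI[OF src.coproduct_j])
  show "tgt.pX \<cdot> \<sigma> \<in> hom C (Cod C j1') WX" "\<tau>X \<cdot> src.pX \<in> hom C (Cod C j1') WX"
    using comp_hom[OF \<sigma> tgt.pX(1)] comp_hom[OF src.pX(1) \<tau>X(1)] src.j1 by (simp_all add: hom_def)
  show "(tgt.pX \<cdot> \<sigma>) \<cdot> j1' = (\<tau>X \<cdot> src.pX) \<cdot> j1'"
    using assoc_hom[OF src.j1 \<sigma> tgt.pX(1)] assoc_hom[OF src.j1 src.pX(1) \<tau>X(1)] \<sigma>_j1 \<tau>X(2) src.pX(2)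
      precomp_eq[OF tgt.pX(2) tgt.j1 tgt.pX(1) h] by simp
  show "(tgt.pX \<cdot> \<sigma>) \<cdot> j2' = (\<tau>X \<cdot> src.pX) \<cdot> j2'"
    using assoc_hom[OF src.j2 \<sigma> tgt.pX(1)] assoc_hom[OF src.j2 src.pX(1) \<tau>X(1)] \<sigma>_j2 \<tau>X(3) src.pX(3)
      precomp_eq[OF tgt.pX(3) tgt.j2 tgt.pX(1) f] by simp
  show "(tgt.pX \<cdot> \<sigma>) \<cdot> j3' = (\<tau>X \<cdot> src.pX) \<cdot> j3'"
    using assoc_hom[OF src.j3 \<sigma> tgt.pX(1)] assoc_hom[OF src.j3 src.pX(1) \<tau>X(1)] \<sigma>_j3 src.pX(4)
      precomp_eq[OF tgt.pX(4) tgt.j3 tgt.pX(1) g] g \<tau>X(1) src.objects tgt.objects by (simp add: hom_def)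
qed

lemma pY_\<sigma>: "tgt.pY \<cdot> \<sigma> = \<tau>Y \<cdot> src.pY"
proof (rule coproduct3_eqI[OF src.coproduct_j])
  show "tgt.pY \<cdot> \<sigma> \<in> hom C (Cod C j1') WY" "\<tau>Y \<cdot> src.pY \<in> hom C (Cod C j1') WY"
    using comp_hom[OF \<sigma> tgt.pY(1)] comp_hom[OF src.pY(1) \<tau>Y(1)] src.j1 by (simp_all add: hom_def)
  show "(tgt.pY \<cdot> \<sigma>) \<cdot> j1' = (\<tau>Y \<cdot> src.pY) \<cdot> j1'"
    using assoc_hom[OF src.j1 \<sigma> tgt.pY(1)] assoc_hom[OF src.j1 src.pY(1) \<tau>Y(1)] \<sigma>_j1 \<tau>Y(2) src.pY(2)
      precomp_eq[OF tgt.pY(2) tgt.j1 tgt.pY(1) h] by simp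
  show "(tgt.pY \<cdot> \<sigma>) \<cdot> j2' = (\<tau>Y \<cdot> src.pY) \<cdot> j2'"
    using assoc_hom[OF src.j2 \<sigma> tgt.pY(1)] assoc_hom[OF src.j2 src.pY(1) \<tau>Y(1)] \<sigma>_j2 src.pY(3)
      precomp_eq[OF tgt.pY(3) tgt.j2 tgt.pY(1) f] f \<tau>Y(1) src.objects tgt.objects by (simp add: hom_def)
  show "(tgt.pY \<cdot> \<sigma>) \<cdot> j3' = (\<tau>Y \<cdot> src.pY) \<cdot> j3'"
    using assoc_hom[OF src.j3 \<sigma> tgt.pY(1)] assoc_hom[OF src.j3 src.pY(1) \<tau>Y(1)] \<sigma>_j3 \<tau>Y(3) src.pY(4)
      precomp_eq[OF tgt.pY(4) tgt.j3 tgt.pY(1) g] by simp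
qed

lemma \<sigma>_sX: "\<sigma> \<cdot> src.sX = tgt.sX \<cdot> \<tau>X"
proof (rule coproduct_eqI[OF src.coproduct_a])
  show "\<sigma> \<cdot> src.sX \<in> hom C (Cod C a1') P" "tgt.sX \<cdot> \<tau>X \<in> hom C (Cod C a1') P"
    using comp_hom[OF src.sX(1) \<sigma>] comp_hom[OF \<tau>X(1) tgt.sX(1)] src.a1 by (simp_all add: hom_def)
  show "(\<sigma> \<cdot> src.sX) \<cdot> a1' = (tgt.sX \<cdot> \<tau>X) \<cdot> a1'"
    using assoc_hom[OF src.a1 src.sX(1) \<sigma>] assoc_hom[OF src.a1 \<tau>X(1) tgt.sX(1)] src.sX(2) \<tau>X(2) \<sigma>_j1
      precomp_eq[OF tgt.sX(2) tgt.a1 tgt.sX(1) h] by simp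
  show "(\<sigma> \<cdot> src.sX) \<cdot> a2' = (tgt.sX \<cdot> \<tau>X) \<cdot> a2'"
    using assoc_hom[OF src.a2 src.sX(1) \<sigma>] assoc_hom[OF src.a2 \<tau>X(1) tgt.sX(1)] src.sX(3) \<tau>X(3) \<sigma>_j2
      precomp_eq[OF tgt.sX(3) tgt.a2 tgt.sX(1) f] by simp
qed

lemma \<sigma>_cY: "\<sigma> \<cdot> src.cY = tgt.cY \<cdot> \<tau>Y"
proof (rule coproduct_eqI[OF src.coproduct_b])
  show "\<sigma> \<cdot> src.cY \<in> hom C (Cod C b1') P" "tgt.cY \<cdot> \<tau>Y \<in> hom C (Cod C b1') P"
    using comp_hom[OF src.cY(1) \<sigma>] comp_hom[OF \<tau>Y(1) tgt.cY(1)] src.b1 by (simp_all add: hom_def)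
  show "(\<sigma> \<cdot> src.cY) \<cdot> b1' = (tgt.cY \<cdot> \<tau>Y) \<cdot> b1'"
    using assoc_hom[OF src.b1 src.cY(1) \<sigma>] assoc_hom[OF src.b1 \<tau>Y(1) tgt.cY(1)] src.cY(2) \<tau>Y(2) \<sigma>_j1
      precomp_eq[OF tgt.cY(2) tgt.b1 tgt.cY(1) h] by simp
  show "(\<sigma> \<cdot> src.cY) \<cdot> b2' = (tgt.cY \<cdot> \<tau>Y) \<cdot> b2'"
    using assoc_hom[OF src.b2 src.cY(1) \<sigma>] assoc_hom[OF src.b2 \<tau>Y(1) tgt.cY(1)] src.cY(3) \<tau>Y(3) \<sigma>_j3
      precomp_eq[OF tgt.cY(3) tgt.b2 tgt.cY(1) g] by simp
qed

lemma e2_\<tau>Y: "e2 \<cdot> \<tau>Y = h \<cdot> e2'"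
proof (rule coproduct_eqI[OF src.coproduct_b])
  show "e2 \<cdot> \<tau>Y \<in> hom C (Cod C b1') W" "h \<cdot> e2' \<in> hom C (Cod C b1') W"
    using comp_hom[OF \<tau>Y(1) tgt.e2] comp_hom[OF src.e2 h] src.b1 by (simp_all add: hom_def)
  show "(e2 \<cdot> \<tau>Y) \<cdot> b1' = (h \<cdot> e2') \<cdot> b1'"
    using assoc_hom[OF src.b1 \<tau>Y(1) tgt.e2] assoc_hom[OF src.b1 src.e2 h] \<tau>Y(2) src.e2_b1
      precomp_eq[OF tgt.e2_b1 tgt.b1 tgt.e2 h] idl_hom[OF h] idr_hom[OF h] by simp
  show "(e2 \<cdot> \<tau>Y) \<cdot> b2' = (h \<cdot> e2') \<cdot> b2'"
    using assoc_hom[OF src.b2 \<tau>Y(1) tgt.e2] assoc_hom[OF src.b2 src.e2 h] \<tau>Y(3) src.e2_b2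
      precomp_eq[OF tgt.e2_b2 tgt.b2 tgt.e2 g] g h src.objects tgt.objects by (simp add: hom_def)
qed

definition \<sigma>X :: 'm where "\<sigma>X = kernel_map tgt.\<kappa>X \<sigma> src.\<kappa>X"
definition \<tau>Y0 :: 'm where "\<tau>Y0 = kernel_map tgt.\<kappa>Y \<tau>Y src.\<kappa>Y"

lemma \<sigma>X: "\<sigma>X \<in> hom C src.NX tgt.NX" "tgt.\<kappa>X \<cdot> \<sigma>X = \<sigma> \<cdot> src.\<kappa>X"
  using kernel_map[OF tgt.kernel_pX src.kernel_pX tgt.pX(1) src.pX(1) \<sigma> \<tau>X(1) pX_\<sigma>]
  by (simp_all add: \<sigma>X_def src.NX_def tgt.NX_def)

lemma \<tau>Y0: "\<tau>Y0 \<in> hom C src.NY tgt.NY" "tgt.\<kappa>Y \<cdot> \<tau>Y0 = \<tau>Y \<cdot> src.\<kappa>Y"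
  using kernel_map[OF tgt.kernel_e2 src.kernel_e2 tgt.e2 src.e2 \<tau>Y(1) h e2_\<tau>Y]
  by (simp_all add: \<tau>Y0_def src.NY_def tgt.NY_def)

lemma qY_\<sigma>X: "tgt.qY \<cdot> \<sigma>X = \<tau>Y0 \<cdot> src.qY"
  by (rule restriction_square[OF kernel_monic[OF tgt.kernel_e2] tgt.\<kappa>Y tgt.\<kappa>X src.\<kappa>Y src.\<kappa>X
        tgt.pY(1) src.pY(1) \<sigma> \<tau>Y(1) tgt.qY(1) src.qY(1) \<sigma>X(1) \<tau>Y0(1) tgt.qY(2) src.qY(2) \<sigma>X(2) \<tau>Y0(2) pY_\<sigma>])

lemma \<sigma>X_sY: "\<sigma>X \<cdot> src.sY = tgt.sY \<cdot> \<tau>Y0"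
  by (rule restriction_square[OF kernel_monic[OF tgt.kernel_pX] tgt.\<kappa>X src.\<kappa>X tgt.\<kappa>Y src.\<kappa>Y
        \<sigma> \<tau>Y(1) src.cY(1) tgt.cY(1) \<sigma>X(1) \<tau>Y0(1) src.sY(1) tgt.sY(1) \<sigma>X(2) \<tau>Y0(2) src.sY(2) tgt.sY(2) \<sigma>_cY])

lemma regular_epi_\<sigma>X:
  assumes "regular_epi C \<sigma>" shows "regular_epi C \<sigma>X"
  using kernel_map_regular_epi[OF assms \<sigma> \<tau>X(1) src.pX(1) src.sX(1) src.pX_sX tgt.pX(1) tgt.sX(1)
      pX_\<sigma> \<sigma>_sX src.kernel_pX tgt.kernel_pX _ \<sigma>X(2)] \<sigma>X(1)
  by (simp add: src.NX_def tgt.NX_def)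

lemma regular_epi_kernel_map:
  assumes \<sigma>R: "regular_epi C \<sigma>" and t: "t \<in> hom C (Dom C k') (Dom C k)" and kt: "k \<cdot> t = \<sigma> \<cdot> k'"
  shows "regular_epi C t"
proof -
  have "tgt.\<kappa>X \<cdot> (tgt.k0 \<cdot> t) = tgt.\<kappa>X \<cdot> (\<sigma>X \<cdot> src.k0)"
    using precomp_eq[OF tgt.k0(2) tgt.k0(1) tgt.\<kappa>X t] kt src.k0(2)
      precomp_square[OF \<sigma>X(2) \<sigma>X(1) tgt.\<kappa>X src.\<kappa>X \<sigma> src.k0(1)] by simp
  then have "tgt.k0 \<cdot> t = \<sigma>X \<cdot> src.k0"
    using monicD[OF kernel_monic[OF tgt.kernel_pX]] comp_hom[OF t tgt.k0(1)] comp_hom[OF src.k0(1) \<sigma>X(1)]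
    by (simp add: tgt.NX_def)
  moreover have "t \<in> hom C (Dom C src.k0) (Dom C tgt.k0)" using t src.k0(1) tgt.k0(1) by (simp add: hom_def)
  ultimately show ?thesis
    using kernel_map_regular_epi[OF regular_epi_\<sigma>X[OF \<sigma>R] \<sigma>X(1) \<tau>Y0(1) src.qY(1) src.sY(1) src.qY_sY
        tgt.qY(1) tgt.sY(1) qY_\<sigma>X \<sigma>X_sY src.kernel_qY tgt.kernel_qY] by blast
qed

end

theorem lemma5p1:
  fixes C :: "('o, 'm) cat"
  assumes "semi_abelian C"
    and "f \<in> hom C X' X" and "g \<in> hom C Y' Y" and "h \<in> hom C W' W"
    and "normal_epi C f" and "normal_epi C g" and "normal_epi C h"
    and "is_tensor C W' X' Y' j1' j2' j3' k'"
    and "is_tensor C W X Y j1 j2 j3 k"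
    and "\<sigma> \<in> hom C (Cod C j1') (Cod C j1)"
    and "Cmp C \<sigma> j1' = Cmp C j1 h" and "Cmp C \<sigma> j2' = Cmp C j2 f" and "Cmp C \<sigma> j3' = Cmp C j3 g"
    and "t \<in> hom C (Dom C k') (Dom C k)" and "Cmp C k t = Cmp C \<sigma> k'"
  shows "normal_epi C t"
proof -
  interpret semi_abelian_category C by unfold_locales (rule assms(1))
  obtain P' WX' WY' Q' a1' a2' b1' b2' e1' e2' p1' p2' m' where src:
    "tensor_presentation C W' X' Y' P' WX' WY' Q' j1' j2' j3' a1' a2' b1' b2' e1' e2' p1' p2' m' k'"
    using tensor_presentationI[OF assms(8)] by blast
  obtain P WX WY Q a1 a2 b1 b2 e1 e2 p1 p2 m where tgt:
    "tensor_presentation C W X Y P WX WY Q j1 j2 j3 a1 a2 b1 b2 e1 e2 p1 p2 m k"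
    using tensor_presentationI[OF assms(9)] by blast
  have j: "Cod C j1' = P'" "Cod C j1 = P"
    using tensor_presentation.j1[OF src] tensor_presentation.j1[OF tgt] by (simp_all add: hom_def)
  interpret tensor_map C W' X' Y' P' WX' WY' Q' W X Y P WX WY Q j1' j2' j3' a1' a2' b1' b2' e1' e2' p1' p2' m' k'
    j1 j2 j3 a1 a2 b1 b2 e1 e2 p1 p2 m k h f g \<sigma>
    using src tgt assms(2-4,10-13) j
    by (simp add: tensor_map_def tensor_map_axioms_def tensor_presentation_def)
  have "strong_epi f" "strong_epi g" "strong_epi h"
    using assms(5-7) regular_epi_strong normal_epi_regular by blast+
  then have "regular_epi C \<sigma>"
    using strong_epi_regular coproduct3_map_strong_epi[OF src.coproduct_j tgt.coproduct_j src.j1 src.j2 src.j3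
        tgt.j1 tgt.j2 tgt.j3 h f g] \<sigma> \<sigma>_j1 \<sigma>_j2 \<sigma>_j3 by blast
  then show ?thesis using regular_epi_normal regular_epi_kernel_map assms(14,15) by blast
qed

end
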